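(* Let $d_1,d_2,a,b,e,\rho,h_0>0$, let $J_1,J_2$ satisfy (J), $W$ satisfy (W), $G$ satisfy (G1)–(G2), $(u_0,v_0)$ satisfy (IC), and for $\mu>0$ let $(u^\mu,v^\mu,g^\mu,h^\mu)$ denote the solution of problem (P) with parameter $\mu$. If $0<\mu_1\le\mu_2$, then $h^{\mu_1}(t)\le h^{\mu_2}(t)$, $g^{\mu_1}(t)\ge g^{\mu_2}(t)$, $u^{\mu_1}(t,x)\le u^{\mu_2}(t,x)$ and $v^{\mu_1}(t,x)\le v^{\mu_2}(t,x)$ for $t>0$ and $x\in(g^{\mu_1}(t),h^{\mu_1}(t))$.
   Context: Condition (J) on $J_i$ ($i=1,2$): $J_i\in C(\mathbb{R})\cap L^\infty(\mathbb{R})$, $J_i(x)=J_i(-x)\ge 0$, $J_i(0)>0$, $\int_{\mathbb{R}}J_i=1$. $W_{J_1}(x):=\int_x^{\infty}J_1(y)\,dy$. (W): $W\in L^\infty([0,\infty))$ nonnegative, locally Lipschitz on $[0,\infty)$, $W(0)>0$. (G1): $G\in C^1([0,\infty))$, $G(0)=0$, $G'>0$. (G2): $(G(z)/z)'<0$ for $z>0$, $\lim_{z\to\infty}G(z)/z<ab/e$. (IC): $u_0,v_0\in C([-h_0,h_0])$, vanishing at $\pm h_0$, positive in $(-h_0,h_0)$. Problem (P): for $t>0$, $x\in(g(t),h(t))$: $u_t=d_1\int_{g(t)}^{h(t)}J_1(x-y)u(t,y)dy-d_1u-au+ev$, $v_t=d_2\int_{g(t)}^{h(t)}J_2(x-y)v(t,y)dy-d_2v-bv+G(u)$;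 $u=v=0$ at $x=g(t),h(t)$; $h'(t)=\mu\int_{g(t)}^{h(t)}[uW_{J_1}(h(t)-x)+\rho vW(h(t)-x)]dx$; $g'(t)=-\mu\int_{g(t)}^{h(t)}[uW_{J_1}(x-g(t))+\rho vW(x-g(t))]dx$; $h(0)=-g(0)=h_0$, $(u,v)(0,\cdot)=(u_0,v_0)$. It has a unique global solution. *)

theory Defs
  imports "HOL-Analysis.Analysis"
begin

definition cond_J :: "(real \<Rightarrow> real) \<Rightarrow> bool" where
  "cond_J J \<longleftrightarrow> continuous_on UNIV J \<and> bounded (range J) \<and>
     (\<forall>x. J x = J (- x) \<and> J x \<ge> 0) \<and> J 0 > 0 \<and> (J has_integral 1) UNIV"

definition W_J :: "(real \<Rightarrow> real) \<Rightarrow> real \<Rightarrow> real" where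
  "W_J J x = integral {x..} J"

definition cond_W :: "(real \<Rightarrow> real) \<Rightarrow> bool" where
  "cond_W W \<longleftrightarrow> bounded (W ` {0..}) \<and> (\<forall>x\<ge>0. W x \<ge> 0) \<and>
     (\<forall>R\<ge>0. \<exists>L. L-lipschitz_on {0..R} W) \<and> W 0 > 0"

definition cond_G1 :: "(real \<Rightarrow> real) \<Rightarrow> bool" where
  "cond_G1 G \<longleftrightarrow> (\<exists>G'. (\<forall>z\<ge>0. (G has_real_derivative G' z) (at z within {0..})) \<and>
      continuous_on {0..} G' \<and> (\<forall>z\<ge>0. G' z > 0)) \<and> G 0 = 0"

definition cond_G2 :: "real \<Rightarrow> real \<Rightarrow> real \<Rightarrow> (real \<Rightarrow> real) \<Rightarrow> bool" where
  "cond_G2 a b e G \<longleftrightarrow> (\<forall>z>0. deriv (\<lambda>s. G s / s) z < 0) \<and>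
     (\<exists>L. ((\<lambda>z. G z / z) \<longlongrightarrow> L) at_top \<and> L < a * b / e)"

definition cond_IC :: "real \<Rightarrow> (real \<Rightarrow> real) \<Rightarrow> (real \<Rightarrow> real) \<Rightarrow> bool" where
  "cond_IC h0 u0 v0 \<longleftrightarrow> continuous_on {-h0..h0} u0 \<and> continuous_on {-h0..h0} v0 \<and>
     u0 (-h0) = 0 \<and> u0 h0 = 0 \<and> v0 (-h0) = 0 \<and> v0 h0 = 0 \<and>
     (\<forall>x. -h0 < x \<and> x < h0 \<longrightarrow> u0 x > 0 \<and> v0 x > 0)"

text \<open>(u,v,g,h) is a (classical, global) solution of problem (P) with parameter mu.
  u t x, v t x are the densities at time t and position x; only their values on
  the closed region {(t,x). t \<ge> 0, g t \<le> x \<le> h t} are relevant.\<close>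
definition sol_P ::
  "real \<Rightarrow> real \<Rightarrow> real \<Rightarrow> real \<Rightarrow> real \<Rightarrow> real \<Rightarrow> real \<Rightarrow>
   (real \<Rightarrow> real) \<Rightarrow> (real \<Rightarrow> real) \<Rightarrow> (real \<Rightarrow> real) \<Rightarrow> (real \<Rightarrow> real) \<Rightarrow>
   real \<Rightarrow> (real \<Rightarrow> real) \<Rightarrow> (real \<Rightarrow> real) \<Rightarrow>
   (real \<Rightarrow> real \<Rightarrow> real) \<Rightarrow> (real \<Rightarrow> real \<Rightarrow> real) \<Rightarrow> (real \<Rightarrow> real) \<Rightarrow> (real \<Rightarrow> real) \<Rightarrow> bool"
where
  "sol_P d1 d2 a b e \<rho> \<mu> J1 J2 W G h0 u0 v0 u v g h \<longleftrightarrow>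
     continuous_on {0..} g \<and> continuous_on {0..} h \<and> h 0 = h0 \<and> g 0 = - h0 \<and>
     continuous_on {(t, x). 0 \<le> t \<and> g t \<le> x \<and> x \<le> h t} (\<lambda>(t, x). u t x) \<and>
     continuous_on {(t, x). 0 \<le> t \<and> g t \<le> x \<and> x \<le> h t} (\<lambda>(t, x). v t x) \<and>
     (\<forall>t>0. \<forall>x. g t < x \<and> x < h t \<longrightarrow>
        ((\<lambda>s. u s x) has_real_derivative
           (d1 * integral {g t..h t} (\<lambda>y. J1 (x - y) * u t y) - d1 * u t x - a * u t x + e * v t x))
          (at t) \<and>
        ((\<lambda>s. v s x) has_real_derivative
           (d2 * integral {g t..h t} (\<lambda>y. J2 (x - y) * v t y) - d2 * v t x - b * v t x + G (u t x)))
          (at t)) \<and>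
     (\<forall>t\<ge>0. u t (g t) = 0 \<and> u t (h t) = 0 \<and> v t (g t) = 0 \<and> v t (h t) = 0) \<and>
     (\<forall>t>0. (h has_real_derivative
          (\<mu> * integral {g t..h t} (\<lambda>x. u t x * W_J J1 (h t - x) + \<rho> * v t x * W (h t - x))))
        (at t) \<and>
        (g has_real_derivative
          (- \<mu> * integral {g t..h t} (\<lambda>x. u t x * W_J J1 (x - g t) + \<rho> * v t x * W (x - g t))))
        (at t)) \<and>
     (\<forall>x\<in>{-h0..h0}. u 0 x = u0 x \<and> v 0 x = v0 x)"

end

(*
  The two solutions are compared through a perturbed ordering: for \<epsilon> > 0 and a suitable K,
  h1 < h2 + \<epsilon> e^(K t), g2 - \<epsilon> e^(K t) < g1, and u1, v1 stay below u2, v2 plus M \<epsilon> e^(K t).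
  It holds at t = 0 and cannot fail for the first time at some t > 0. At a first contact inside
  both domains the right-hand sides differ by at most a Lipschitz constant times the perturbation,
  which is less than the growth rate K \<epsilon> e^(K t) of the barrier. A point of the first domain that
  is not in the second one was reached by a front of the first solution within time
  \<epsilon> e^(K t) / \<delta>, where \<delta> > 0 bounds the front speed from below, so u1 and v1 are still
  smaller than M \<epsilon> e^(K t) there. Letting \<epsilon> tend to 0 gives the claim.

  Since G is only controlled on [0, \<infinity>), nonnegativity of solutions is proved first, by continuous
  induction in time: near the free boundary the nonlocal terms make u and v increase. Strict
  positivity inside the domain then gives the positive lower bound \<delta> on the speed of the fronts.
*)

theory Submission
  imports Defs
begin

section \<open>Real analysis\<close>

text \<open>No integrability hypothesis: a non-integrable function has integral \<open>0\<close>.\<close>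

lemma integral_nonneg_unconditional:
  fixes f :: "real \<Rightarrow> real"
  assumes "\<And>x. x \<in> S \<Longrightarrow> 0 \<le> f x"
  shows "0 \<le> integral S f"
  by (metis assms integral_nonneg not_integrable_integral order_refl)

lemma integral_pos_if_continuous:
  fixes f :: "real \<Rightarrow> real"
  assumes "continuous_on {c..d} f" "\<And>x. x \<in> {c..d} \<Longrightarrow> 0 \<le> f x"
    and "y \<in> {c..d}" "0 < f y" "c < d"
  shows "0 < integral {c..d} f"
proof -
  have int: "(f has_integral integral {c..d} f) {c..d}"
    using assms(1) integrable_continuous_interval by blast
  have "integral {c..d} f \<noteq> 0"
  proof
    assume "integral {c..d} f = 0"
    then have "f y = 0"
      using has_integral_0_cbox_imp_0[of c d f y] int assms by auto
    then show False using assms(4) by simp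
  qed
  moreover have "0 \<le> integral {c..d} f" by (rule integral_nonneg_unconditional) (use assms(2) in auto)
  ultimately show ?thesis by simp
qed

lemma integral_le_plus_const:
  fixes f g :: "real \<Rightarrow> real"
  assumes "continuous_on {c..d} f" "continuous_on {c..d} g" "c \<le> d"
    and "\<And>x. x \<in> {c..d} \<Longrightarrow> f x \<le> g x + k"
  shows "integral {c..d} f \<le> integral {c..d} g + k * (d - c)"
proof -
  have g: "g integrable_on {c..d}" using assms(2) integrable_continuous_interval by blast
  have "integral {c..d} f \<le> integral {c..d} (\<lambda>x. g x + k)"
    by (rule integral_le) (use assms integrable_continuous_interval integrable_add[OF g integrable_const_ivl] in auto)
  also have "\<dots> = integral {c..d} g + k * (d - c)"
    using integral_add[OF g integrable_const_ivl] assms(3) by simp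
  finally show ?thesis .
qed

lemma weighted_difference_le:
  fixes \<mu>1 \<mu>2 f1 f2 c :: real
  assumes "0 \<le> \<mu>1" "\<mu>1 \<le> \<mu>2" "0 \<le> f2" "f1 \<le> f2 + c"
  shows "\<mu>1 * f1 - \<mu>2 * f2 \<le> \<mu>1 * c"
proof -
  have "\<mu>1 * f1 \<le> \<mu>1 * (f2 + c)" using assms(4,1) by (rule mult_left_mono)
  moreover have "\<mu>1 * f2 \<le> \<mu>2 * f2" using assms(2,3) by (rule mult_right_mono)
  ultimately show ?thesis by (simp add: distrib_left)
qed

lemma increment_ge_if_deriv_ge:
  fixes f :: "real \<Rightarrow> real"
  assumes "a \<le> b" "continuous_on {a..b} f"
    and "\<And>x. a < x \<Longrightarrow> x < b \<Longrightarrow> \<exists>D. (f has_real_derivative D) (at x) \<and> c \<le> D"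
  shows "c * (b - a) \<le> f b - f a"
proof -
  have "f a - c * a \<le> f b - c * b"
  proof (rule DERIV_nonneg_imp_increasing_open[OF assms(1), where f = "\<lambda>x. f x - c * x"])
    fix x assume "a < x" "x < b"
    then obtain D where "(f has_real_derivative D) (at x)" "c \<le> D" using assms(3) by blast
    then show "\<exists>y. ((\<lambda>x. f x - c * x) has_real_derivative y) (at x) \<and> 0 \<le> y"
      by (intro exI[of _ "D - c"]) (auto intro!: derivative_eq_intros)
  qed (intro continuous_intros assms(2))
  then show ?thesis by (simp add: algebra_simps)
qed

lemma increment_le_if_deriv_le:
  fixes f :: "real \<Rightarrow> real"
  assumes "a \<le> b" "continuous_on {a..b} f"
    and "\<And>x. a < x \<Longrightarrow> x < b \<Longrightarrow> \<exists>D. (f has_real_derivative D) (at x) \<and> D \<le> c"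
  shows "f b - f a \<le> c * (b - a)"
proof -
  have "- c * (b - a) \<le> - f b - - f a"
  proof (rule increment_ge_if_deriv_ge)
    fix x assume "a < x" "x < b"
    then obtain D where "(f has_real_derivative D) (at x)" "D \<le> c" using assms(3) by blast
    then show "\<exists>D. ((\<lambda>x. - f x) has_real_derivative D) (at x) \<and> - c \<le> D"
      by (intro exI[of _ "- D"]) (auto intro!: derivative_eq_intros)
  qed (use assms(1,2) in \<open>auto intro!: continuous_intros\<close>)
  then show ?thesis by simp
qed

lemma DERIV_nonneg_if_left_le:
  fixes f :: "real \<Rightarrow> real"
  assumes "(f has_real_derivative D) (at t)" "d > 0"
    and "\<And>s. t - d < s \<Longrightarrow> s < t \<Longrightarrow> f s \<le> f t"
  shows "0 \<le> D"
proof (rule ccontr)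
  assume "\<not> 0 \<le> D"
  then obtain d' where "d' > 0" "\<And>h. h > 0 \<Longrightarrow> h < d' \<Longrightarrow> f t < f (t - h)"
    using DERIV_neg_dec_left[OF assms(1)] by force
  then show False
    using assms(2) assms(3)[of "t - min d d' / 2"] by (smt (verit) field_sum_of_halves)
qed

lemma DERIV_nonpos_if_left_ge:
  fixes f :: "real \<Rightarrow> real"
  assumes "(f has_real_derivative D) (at t)" "d > 0"
    and "\<And>s. t - d < s \<Longrightarrow> s < t \<Longrightarrow> f t \<le> f s"
  shows "D \<le> 0"
  using DERIV_nonneg_if_left_le[of "\<lambda>s. - f s" "- D" t d] assms
  by (auto intro!: derivative_eq_intros)

lemma below_exp_barrier_at_first_contact:
  fixes F :: "real \<Rightarrow> real"
  assumes "(F has_real_derivative D) (at t)" "0 < t"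
    and "\<And>s. 0 \<le> s \<Longrightarrow> s < t \<Longrightarrow> F s < c * exp (K * s)"
    and "c * exp (K * t) \<le> F t \<Longrightarrow> D < K * (c * exp (K * t))"
  shows "F t < c * exp (K * t)"
proof (rule ccontr)
  assume contact: "\<not> F t < c * exp (K * t)"
  have "((\<lambda>s. F s - c * exp (K * s)) has_real_derivative D - K * (c * exp (K * t))) (at t)"
    by (rule derivative_eq_intros assms(1) refl | simp)+
  then have "0 \<le> D - K * (c * exp (K * t))"
  proof (rule DERIV_nonneg_if_left_le[where d = t])
    fix s assume "t - t < s" "s < t"
    then show "F s - c * exp (K * s) \<le> F t - c * exp (K * t)"
      using assms(3)[of s] contact by simp
  qed (use assms(2) in simp)
  then show False using assms(4) contact by simp
qed

lemma nonneg_if_deriv_nonneg_where_neg: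
  fixes \<phi> :: "real \<Rightarrow> real"
  assumes "\<alpha> \<le> \<beta>" "continuous_on {\<alpha>..\<beta>} \<phi>" "0 \<le> \<phi> \<alpha>"
    and "\<And>s. \<alpha> < s \<Longrightarrow> s < \<beta> \<Longrightarrow> \<phi> s < 0 \<Longrightarrow> \<exists>D. (\<phi> has_real_derivative D) (at s) \<and> 0 \<le> D"
  shows "0 \<le> \<phi> \<beta>"
proof (rule ccontr)
  assume neg: "\<not> 0 \<le> \<phi> \<beta>"
  define A where "A = {\<alpha>..\<beta>} \<inter> \<phi> -` {0..}"
  have bdd: "bdd_above A" unfolding A_def by (rule bdd_aboveI[of _ \<beta>]) auto
  have "closed A" unfolding A_def by (rule continuous_closed_preimage[OF assms(2)]) auto
  moreover have "\<alpha> \<in> A" using assms(1,3) by (auto simp: A_def)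
  ultimately have "Sup A \<in> A" using bdd closed_contains_Sup by blast
  define s0 where "s0 = Sup A"
  have s0: "\<alpha> \<le> s0" "s0 < \<beta>" "0 \<le> \<phi> s0"
    using \<open>Sup A \<in> A\<close> neg by (auto simp: A_def s0_def) (metis antisym_conv1)
  have after: "\<phi> s < 0" if "s0 < s" "s \<le> \<beta>" for s
    using that s0 cSup_upper[OF _ bdd, of s] by (force simp: A_def s0_def)
  have "\<phi> s0 \<le> \<phi> \<beta>"
  proof (rule DERIV_nonneg_imp_increasing_open[where f = \<phi>])
    show "continuous_on {s0..\<beta>} \<phi>" using continuous_on_subset[OF assms(2)] s0 by auto
    fix s assume "s0 < s" "s < \<beta>"
    then show "\<exists>y. (\<phi> has_real_derivative y) (at s) \<and> 0 \<le> y"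
      using assms(4)[of s] after[of s] s0 by auto
  qed (use s0 in simp)
  then show False using s0 neg by auto
qed

lemma nonneg_at_if_nonneg_before:
  fixes \<phi> :: "real \<Rightarrow> real"
  assumes "continuous_on {a..t} \<phi>" "a < t" "\<And>s. a \<le> s \<Longrightarrow> s < t \<Longrightarrow> 0 \<le> \<phi> s"
  shows "0 \<le> \<phi> t"
proof (rule ccontr)
  assume neg: "\<not> 0 \<le> \<phi> t"
  then obtain d where d: "d > 0" "\<And>s. s \<in> {a..t} \<Longrightarrow> dist s t < d \<Longrightarrow> dist (\<phi> s) (\<phi> t) < - \<phi> t"
    using assms(1,2) unfolding continuous_on_iff by (metis atLeastAtMost_iff neg_0_less_iff_less not_le order_refl less_imp_le)
  define s where "s = max a (t - d / 2)"
  have "a \<le> s" "s < t" "dist s t < d" using d assms(2) by (auto simp: s_def dist_real_def)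
  then show False using d(2)[of s] assms(3)[of s] by (auto simp: dist_real_def)
qed

lemma real_continuous_induction:
  fixes P :: "real \<Rightarrow> bool"
  assumes "P a"
    and left: "\<And>t. a < t \<Longrightarrow> t \<le> b \<Longrightarrow> (\<And>s. a \<le> s \<Longrightarrow> s < t \<Longrightarrow> P s) \<Longrightarrow> P t"
    and right: "\<And>t. a \<le> t \<Longrightarrow> t < b \<Longrightarrow> (\<And>s. a \<le> s \<Longrightarrow> s \<le> t \<Longrightarrow> P s) \<Longrightarrow>
      \<exists>\<eta>>0. \<forall>s. t < s \<and> s < t + \<eta> \<longrightarrow> P s"
    and "t \<in> {a..b}"
  shows "P t"
proof -
  define S where "S = {\<tau> \<in> {a..b}. \<forall>s\<in>{a..\<tau>}. P s}"
  define \<sigma> where "\<sigma> = Sup S"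
  have "a \<in> S" using assms(1,4) by (auto simp: S_def)
  have bdd: "bdd_above S" by (rule bdd_aboveI[of _ b]) (auto simp: S_def)
  have \<sigma>: "a \<le> \<sigma>" "\<sigma> \<le> b"
    unfolding \<sigma>_def
    by (rule cSup_upper[OF \<open>a \<in> S\<close> bdd], rule cSup_least) (use \<open>a \<in> S\<close> in \<open>auto simp: S_def\<close>)
  have before: "P s" if s: "a \<le> s" "s < \<sigma>" for s
  proof -
    obtain \<tau> where "\<tau> \<in> S" "s < \<tau>"
      using s(2) less_cSup_iff[OF _ bdd, of s] \<open>a \<in> S\<close> unfolding \<sigma>_def by auto
    then show ?thesis using s by (auto simp: S_def)
  qed
  have upto: "P s" if "a \<le> s" "s \<le> \<sigma>" for s
  proof (cases "s < \<sigma>")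
    case False
    then have "s = \<sigma>" using that by simp
    then show ?thesis using before left[of \<sigma>] \<sigma> assms(1) by (cases "\<sigma> = a") auto
  qed (use before that in blast)
  have "\<sigma> = b"
  proof (rule ccontr)
    assume "\<sigma> \<noteq> b"
    then obtain \<eta> where \<eta>: "\<eta> > 0" "\<And>s. \<sigma> < s \<Longrightarrow> s < \<sigma> + \<eta> \<Longrightarrow> P s"
      using right[OF \<sigma>(1) _ upto] \<sigma>(2) by (metis order_less_le)
    define \<tau> where "\<tau> = min (\<sigma> + \<eta> / 2) b"
    have "\<sigma> < \<tau>" using \<eta>(1) \<sigma>(2) \<open>\<sigma> \<noteq> b\<close> by (simp add: \<tau>_def)
    have "P s" if "a \<le> s" "s \<le> \<tau>" for s
      using upto[of s] \<eta>(2)[of s] that \<eta>(1) by (cases "s \<le> \<sigma>") (auto simp: \<tau>_def)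
    then have "\<tau> \<in> S" using \<sigma> \<open>\<sigma> < \<tau>\<close> by (auto simp: S_def \<tau>_def)
    then have "\<tau> \<le> \<sigma>" unfolding \<sigma>_def by (rule cSup_upper[OF _ bdd])
    then show False using \<open>\<sigma> < \<tau>\<close> by simp
  qed
  then show ?thesis using upto assms(4) by simp
qed

lemma close_point_in_interval:
  fixes s t p q p' q' x \<delta> :: real
  assumes "p \<le> q" "\<bar>s - t\<bar> < \<delta> / 2" "\<bar>p' - p\<bar> < \<delta> / 2" "\<bar>q' - q\<bar> < \<delta> / 2" "p' < x" "x < q'"
  shows "\<exists>x'\<in>{p..q}. dist (s, x) (t, x') < \<delta>"
proof
  define x' where "x' = max p (min q x)"
  show "x' \<in> {p..q}" using assms(1) by (auto simp: x'_def)
  have "0 < \<delta>" using assms(2) abs_ge_zero[of "s - t"] by linarith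
  then have "\<bar>x - x'\<bar> < \<delta> / 2"
    using assms unfolding x'_def max_def min_def by (auto simp: abs_less_iff)
  then show "dist (s, x) (t, x') < \<delta>"
    using norm_Pair_le[of "s - t" "x - x'"] assms(2) by (simp add: dist_norm)
qed

lemma closed_times_with_nonneg_point:
  fixes f :: "real \<Rightarrow> real \<Rightarrow> real"
  assumes "continuous_on ({a..b} \<times> {c..d}) (\<lambda>(t, x). f t x)"
  shows "closed {t \<in> {a..b}. \<exists>x\<in>{c..d}. 0 \<le> f t x}"
proof -
  let ?A = "({a..b} \<times> {c..d}) \<inter> (\<lambda>(t, x). f t x) -` {0..}"
  have "closed ?A"
    by (rule continuous_closed_preimage[OF assms]) (auto intro: closed_Times)
  then have "compact ?A"
    using compact_Int_closed[OF compact_Times[OF compact_Icc compact_Icc]] by (metis Int_assoc Int_absorb)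
  then have "compact (fst ` ?A)" by (rule compact_continuous_image[OF continuous_on_fst[OF continuous_on_id]])
  moreover have "{t \<in> {a..b}. \<exists>x\<in>{c..d}. 0 \<le> f t x} = fst ` ?A" by force
  ultimately show ?thesis by (simp add: compact_imp_closed)
qed

lemma integral_param_uniformly_pos:
  fixes f :: "real \<Rightarrow> real \<Rightarrow> real"
  assumes "continuous_on ({a..b} \<times> {c..d}) (\<lambda>(t, x). f t x)" "a \<le> b"
    and "\<And>t. t \<in> {a..b} \<Longrightarrow> 0 < integral {c..d} (f t)"
  obtains m where "0 < m" "\<And>t. t \<in> {a..b} \<Longrightarrow> m \<le> integral {c..d} (f t)"
proof -
  have cont: "continuous_on {a..b} (\<lambda>t. integral {c..d} (f t))"
    using integral_continuous_on_param[of "{a..b}" c d f] assms(1) by (simp add: cbox_interval)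
  then obtain t0 where "t0 \<in> {a..b}" "\<And>t. t \<in> {a..b} \<Longrightarrow> integral {c..d} (f t0) \<le> integral {c..d} (f t)"
    using continuous_attains_inf[OF compact_Icc _ cont] assms(2) by auto
  then show ?thesis using that assms(3) by blast
qed

definition zero_ext :: "(real \<Rightarrow> real) \<Rightarrow> (real \<Rightarrow> real) \<Rightarrow> (real \<Rightarrow> real \<Rightarrow> real) \<Rightarrow> real \<Rightarrow> real \<Rightarrow> real"
  where "zero_ext g h w t x = (if g t \<le> x \<and> x \<le> h t then w t x else 0)"

lemma zero_ext_inside: "g t \<le> x \<Longrightarrow> x \<le> h t \<Longrightarrow> zero_ext g h w t x = w t x"
  and zero_ext_outside: "\<not> (g t \<le> x \<and> x \<le> h t) \<Longrightarrow> zero_ext g h w t x = 0"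
  by (auto simp: zero_ext_def)

lemma integral_restrict_subinterval:
  fixes f :: "real \<Rightarrow> real"
  assumes "{c..d} \<subseteq> {a..b}"
  shows "integral {a..b} (\<lambda>x. if x \<in> {c..d} then f x else 0) = integral {c..d} f"
proof -
  have "integral {a..b} (\<lambda>x. if x \<in> {c..d} then f x else 0) = integral ({c..d} \<inter> {a..b}) f"
    by (rule integral_restrict_Int)
  also have "{c..d} \<inter> {a..b} = {c..d}" using assms by auto
  finally show ?thesis .
qed

lemma integral_zero_ext:
  assumes "-R \<le> g t" "h t \<le> R"
  shows "integral {g t..h t} (\<lambda>y. f y * w t y) = integral {-R..R} (\<lambda>y. f y * zero_ext g h w t y)"
proof -
  have "integral {-R..R} (\<lambda>y. f y * zero_ext g h w t y)
      = integral {-R..R} (\<lambda>y. if y \<in> {g t..h t} then f y * w t y else 0)"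
    by (rule integral_cong) (simp add: zero_ext_def)
  also have "\<dots> = integral {g t..h t} (\<lambda>y. f y * w t y)"
    by (rule integral_restrict_subinterval) (use assms in auto)
  finally show ?thesis by simp
qed

lemma continuous_on_zero_ext:
  fixes g h :: "real \<Rightarrow> real" and w :: "real \<Rightarrow> real \<Rightarrow> real"
  assumes g: "continuous_on {0..} g" and h: "continuous_on {0..} h"
    and w: "continuous_on {(t, x). 0 \<le> t \<and> g t \<le> x \<and> x \<le> h t} (\<lambda>(t, x). w t x)"
    and boundary: "\<And>t. t \<ge> 0 \<Longrightarrow> w t (g t) = 0 \<and> w t (h t) = 0"
  shows "continuous_on ({0..} \<times> UNIV) (\<lambda>(t, x). zero_ext g h w t x)"
proof -
  let ?H = "{0..} \<times> (UNIV :: real set)" and ?f = "\<lambda>(t, x). zero_ext g h w t x"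
  have cg: "continuous_on ?H (\<lambda>p. g (fst p))" and ch: "continuous_on ?H (\<lambda>p. h (fst p))"
    by (auto intro!: continuous_on_compose2[OF g] continuous_on_compose2[OF h] continuous_intros)
  define D where "D = ?H \<inter> (\<lambda>p. min (snd p - g (fst p)) (h (fst p) - snd p)) -` {0..}"
  define L where "L = ?H \<inter> (\<lambda>p. g (fst p) - snd p) -` {0..}"
  define R where "R = ?H \<inter> (\<lambda>p. snd p - h (fst p)) -` {0..}"
  have closed: "closed D" "closed L" "closed R" unfolding D_def L_def R_def
    by (intro continuous_closed_preimage closed_Times continuous_intros cg ch; simp)+
  have D_eq: "D = {(t, x). 0 \<le> t \<and> g t \<le> x \<and> x \<le> h t}" by (auto simp: D_def)
  have "continuous_on D ?f" unfolding D_eq by (rule continuous_on_eq[OF w]) (auto simp: zero_ext_def)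
  moreover have "continuous_on L ?f" "continuous_on R ?f"
    by (intro continuous_on_eq[OF continuous_on_const[of _ 0]];
        force simp: L_def R_def zero_ext_def boundary dest: antisym)+
  ultimately have "continuous_on (D \<union> L \<union> R) ?f"
    using closed by (intro continuous_on_closed_Un closed_Un)
  moreover have "D \<union> L \<union> R = ?H" by (auto simp: D_def L_def R_def)
  ultimately show ?thesis by simp
qed

definition conv :: "real \<Rightarrow> (real \<Rightarrow> real) \<Rightarrow> (real \<Rightarrow> real) \<Rightarrow> real \<Rightarrow> real" where
  "conv R J w x = integral {-R..R} (\<lambda>y. J (x - y) * w y)"

lemma continuous_on_conv:
  fixes w :: "real \<Rightarrow> real \<Rightarrow> real"
  assumes J: "continuous_on UNIV J" and w: "continuous_on (S \<times> UNIV) (\<lambda>(t, y). w t y)"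
  shows "continuous_on (S \<times> UNIV) (\<lambda>(t, x). conv R J (w t) x)"
proof -
  have "continuous_on ((S \<times> UNIV) \<times> cbox (-R) R) (\<lambda>q. w (fst (fst q)) (snd q))"
    by (rule continuous_on_compose2[OF w, of _ "\<lambda>q. (fst (fst q), snd q)", simplified])
       (auto intro!: continuous_intros)
  then have "continuous_on ((S \<times> UNIV) \<times> cbox (-R) R) (\<lambda>(p, y). J (snd p - y) * w (fst p) y)"
    unfolding case_prod_beta' by (intro continuous_intros continuous_on_compose2[OF J]) auto
  from integral_continuous_on_param[OF this] show ?thesis
    by (simp add: conv_def cbox_interval case_prod_beta')
qed

lemma conv_pos:
  assumes J: "continuous_on UNIV J" "\<And>z. 0 \<le> J z" "r > 0" "\<And>z. \<bar>z\<bar> < r \<Longrightarrow> 0 < J z"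
    and w: "continuous_on {-R..R} w" "\<And>y. 0 \<le> w y" "\<And>y. p < y \<Longrightarrow> y < q \<Longrightarrow> 0 < w y"
    and pq: "p < q" "-R \<le> p" "q \<le> R" and x: "x \<in> {p..q}"
  shows "0 < conv R J w x"
  unfolding conv_def
proof (rule integral_pos_if_continuous)
  define m where "m = min (r / 2) ((q - p) / 2)"
  have m: "0 < m" "m < r" "2 * m \<le> q - p" using J(3) pq by (auto simp: m_def min_def)
  define y0 where "y0 = max (p + m) (min (q - m) x)"
  have y0: "p < y0" "y0 < q" "\<bar>x - y0\<bar> < r" using m x by (auto simp: y0_def)
  show "y0 \<in> {-R..R}" using y0 pq by auto
  show "0 < J (x - y0) * w y0" using J(4)[OF y0(3)] w(3)[OF y0(1,2)] by simp
  show "continuous_on {-R..R} (\<lambda>y. J (x - y) * w y)"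
    by (intro continuous_intros continuous_on_compose2[OF J(1)] w(1)) auto
qed (use J(2) w(2) pq in auto)

lemma conv_le_plus:
  assumes J: "continuous_on UNIV J" "\<And>z. 0 \<le> J z" "\<And>z. J z \<le> BJ"
    and w: "continuous_on {-R..R} w1" "continuous_on {-R..R} w2" "\<And>y. y \<in> {-R..R} \<Longrightarrow> w1 y \<le> w2 y + c"
    and "0 \<le> c" "0 \<le> R"
  shows "conv R J w1 x \<le> conv R J w2 x + BJ * c * (2 * R)"
proof -
  have cJ: "continuous_on {-R..R} (\<lambda>y. J (x - y))"
    by (rule continuous_on_compose2[OF J(1)]) (auto intro!: continuous_intros)
  have "J (x - y) * w1 y \<le> J (x - y) * w2 y + BJ * c" if "y \<in> {-R..R}" for y
  proof -
    have "J (x - y) * w1 y \<le> J (x - y) * (w2 y + c)" using w(3)[OF that] J(2) by (rule mult_left_mono)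
    also have "\<dots> \<le> J (x - y) * w2 y + BJ * c" using J(3)[of "x - y"] \<open>0 \<le> c\<close> by (simp add: distrib_left mult_right_mono)
    finally show ?thesis .
  qed
  then have "conv R J w1 x \<le> conv R J w2 x + BJ * c * (R - - R)"
    unfolding conv_def using \<open>0 \<le> R\<close>
    by (intro integral_le_plus_const continuous_intros cJ w(1,2)) auto
  then show ?thesis by simp
qed

section \<open>The kernels, the weight and the reaction term\<close>

lemma cond_J_continuous: "cond_J J \<Longrightarrow> continuous_on UNIV J"
  and cond_J_nonneg: "cond_J J \<Longrightarrow> 0 \<le> J x"
  by (simp_all add: cond_J_def)

lemma cond_J_bounded:
  assumes "cond_J J"
  obtains BJ where "0 \<le> BJ" "\<And>x. J x \<le> BJ"
proof -
  have "bounded (range J)" using assms by (simp add: cond_J_def)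
  then obtain B where B: "\<And>x. norm (J x) \<le> B" unfolding bounded_iff by blast
  show ?thesis
  proof (rule that)
    show "0 \<le> B" using B[of 0] norm_ge_zero order_trans by blast
    show "J x \<le> B" for x using B[of x] by simp
  qed
qed

lemma cond_J_pos_near_0:
  assumes "cond_J J"
  obtains r where "r > 0" "\<And>z. \<bar>z\<bar> < r \<Longrightarrow> 0 < J z"
proof -
  have "isCont J 0" "J 0 > 0"
    using assms by (simp_all add: cond_J_def continuous_on_eq_continuous_at)
  then obtain r where "r > 0" "\<And>z. dist z 0 < r \<Longrightarrow> dist (J z) (J 0) < J 0"
    unfolding continuous_at_eps_delta by blast
  then show ?thesis using that[of r] by (force simp: dist_real_def abs_less_iff)
qed

lemma cond_J_integrable_atLeast:
  assumes "cond_J J"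
  shows "J integrable_on {y..}"
proof -
  have "J absolutely_integrable_on UNIV"
    using assms unfolding cond_J_def by (meson has_integral_integrable nonnegative_absolutely_integrable_1)
  then have "J absolutely_integrable_on {y..}" using set_integrable_subset by fastforce
  then show ?thesis using absolutely_integrable_on_def by blast
qed

lemma W_J_split:
  assumes "cond_J J" "y \<le> z"
  shows "W_J J y = integral {y..z} J + W_J J z"
proof -
  have "J integrable_on {y..z}"
    using integrable_continuous_interval continuous_on_subset[OF cond_J_continuous[OF assms(1)]] by blast
  moreover have "negligible ({y..z} \<inter> {z..})"
    by (rule negligible_subset[OF negligible_sing[of z]]) auto
  moreover have "{y..} = {y..z} \<union> {z..}" using assms(2) by auto
  ultimately show ?thesis
    unfolding W_J_def using integral_Un cond_J_integrable_atLeast[OF assms(1)] by simp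
qed

lemma W_J_nonneg: "cond_J J \<Longrightarrow> 0 \<le> W_J J y"
  unfolding W_J_def by (rule integral_nonneg_unconditional) (simp add: cond_J_nonneg)

lemma W_J_antimono: "cond_J J \<Longrightarrow> y \<le> z \<Longrightarrow> W_J J z \<le> W_J J y"
  using W_J_split integral_nonneg_unconditional[of "{y..z}" J] cond_J_nonneg by fastforce

lemma W_J_lipschitz:
  assumes "cond_J J" "\<And>x. J x \<le> BJ"
  shows "BJ-lipschitz_on UNIV (W_J J)"
proof -
  have *: "W_J J p - W_J J q \<le> BJ * (q - p)" if "p \<le> q" for p q
  proof -
    have "W_J J p - W_J J q = integral {p..q} J" using W_J_split[OF assms(1) that] by simp
    also have "\<dots> \<le> BJ * (q - p)"
      using integral_bound[OF that continuous_on_subset[OF cond_J_continuous[OF assms(1)]], of BJ]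
        assms cond_J_nonneg by auto
    finally show ?thesis .
  qed
  show ?thesis
  proof (rule lipschitz_onI)
    fix p q :: real
    show "dist (W_J J p) (W_J J q) \<le> BJ * dist p q"
      using *[of p q] *[of q p] W_J_antimono[OF assms(1), of p q] W_J_antimono[OF assms(1), of q p]
      by (cases "p \<le> q") (auto simp: dist_real_def)
  qed (use assms(2)[of 0] cond_J_nonneg[OF assms(1), of 0] in simp)
qed

lemma W_J_continuous:
  assumes "cond_J J"
  shows "continuous_on UNIV (W_J J)"
proof -
  obtain BJ where "\<And>x. J x \<le> BJ" using cond_J_bounded[OF assms] by blast
  then show ?thesis by (rule lipschitz_on_continuous_on[OF W_J_lipschitz[OF assms]])
qed

lemma W_J_pos_near_0:
  assumes "cond_J J"
  obtains r where "r > 0" "\<And>y. y < r \<Longrightarrow> 0 < W_J J y"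
proof -
  obtain r where r: "r > 0" "\<And>z. \<bar>z\<bar> < r \<Longrightarrow> 0 < J z" using cond_J_pos_near_0[OF assms] by blast
  have "0 < W_J J y" if "y < r / 2" for y
  proof -
    have "0 < integral {y..r/2} J"
      by (rule integral_pos_if_continuous[where y = "r/2"])
         (use that r cond_J_nonneg[OF assms] continuous_on_subset[OF cond_J_continuous[OF assms]] in auto)
    then show ?thesis using W_J_split[OF assms, of y "r/2"] W_J_nonneg[OF assms, of "r/2"] that by auto
  qed
  then show ?thesis using that[of "r/2"] r by auto
qed

lemma W_J_weighted_le:
  assumes "cond_J J" "U1 \<le> U2 + c" "0 \<le> U2" "0 \<le> c" "0 \<le> p1" "p2 \<le> p1"
  shows "U1 * W_J J p1 \<le> U2 * W_J J p2 + c * W_J J 0"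
proof -
  have "U1 * W_J J p1 \<le> (U2 + c) * W_J J p1" using assms(2) W_J_nonneg[OF assms(1)] by (rule mult_right_mono)
  also have "\<dots> \<le> U2 * W_J J p2 + c * W_J J 0"
    using W_J_antimono[OF assms(1) assms(6)] W_J_antimono[OF assms(1) assms(5)] assms(3,4)
    by (simp add: distrib_right add_mono mult_left_mono)
  finally show ?thesis .
qed

text \<open>\<open>W\<close> is only controlled on \<open>[0, \<infinity>)\<close>; clamping the argument gives a continuous function on
  the whole line, so that integrals over a fixed interval containing the support can be used.\<close>

definition W_clamped :: "(real \<Rightarrow> real) \<Rightarrow> real \<Rightarrow> real" where
  "W_clamped W y = W (max y 0)"

lemma W_clamped_eq: "0 \<le> y \<Longrightarrow> W_clamped W y = W y"
  by (simp add: W_clamped_def)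

lemma cond_W_nonneg: "cond_W W \<Longrightarrow> 0 \<le> y \<Longrightarrow> 0 \<le> W y"
  and W_clamped_nonneg: "cond_W W \<Longrightarrow> 0 \<le> W_clamped W y"
  by (simp_all add: cond_W_def W_clamped_def)

lemma cond_W_lipschitz:
  assumes "cond_W W" "0 \<le> R"
  obtains L where "0 \<le> L" "\<And>p q. p \<in> {0..R} \<Longrightarrow> q \<in> {0..R} \<Longrightarrow> \<bar>W p - W q\<bar> \<le> L * \<bar>p - q\<bar>"
proof -
  obtain L where L: "L-lipschitz_on {0..R} W" using assms unfolding cond_W_def by blast
  show ?thesis
    by (rule that[OF lipschitz_on_nonneg[OF L]]) (use lipschitz_onD[OF L] in \<open>simp add: dist_real_def\<close>)
qed

lemma W_clamped_continuous:
  assumes "cond_W W"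
  shows "continuous_on UNIV (W_clamped W)"
proof (rule continuous_at_imp_continuous_on, rule ballI)
  fix y :: real
  define R where "R = \<bar>y\<bar> + 1"
  obtain L where "L-lipschitz_on {0..R} W" using assms unfolding cond_W_def R_def by fastforce
  then have "continuous_on {0..R} W" by (rule lipschitz_on_continuous_on)
  then have "continuous_on {-R..R} (W_clamped W)"
    unfolding W_clamped_def by (rule continuous_on_compose2) (auto intro!: continuous_intros simp: R_def)
  moreover have "y \<in> interior {-R..R}" unfolding R_def by (simp add: abs_if)
  ultimately show "isCont (W_clamped W) y" by (rule continuous_on_interior)
qed

lemma W_clamped_bounded:
  assumes "cond_W W"
  obtains BW where "0 \<le> BW" "\<And>y. W_clamped W y \<le> BW"
proof -
  have "bounded (W ` {0..})" using assms by (simp add: cond_W_def)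
  then obtain B where B: "\<And>y. 0 \<le> y \<Longrightarrow> norm (W y) \<le> B" unfolding bounded_iff by auto
  show ?thesis
  proof (rule that)
    show "0 \<le> B" using B[of 0] norm_ge_zero order_trans by blast
    show "W_clamped W y \<le> B" for y using B[of "max y 0"] by (simp add: W_clamped_def)
  qed
qed

lemma cond_G1_zero: "cond_G1 G \<Longrightarrow> G 0 = 0"
  by (simp add: cond_G1_def)

lemma cond_G1_derivative:
  assumes "cond_G1 G"
  obtains G' where "\<And>z. 0 < z \<Longrightarrow> (G has_real_derivative G' z) (at z)"
    "\<And>z. 0 < z \<Longrightarrow> 0 < G' z" "continuous_on {0..} G'"
proof -
  obtain G' where G': "\<And>z. 0 \<le> z \<Longrightarrow> (G has_real_derivative G' z) (at z within {0..})"
    "continuous_on {0..} G'" "\<And>z. 0 \<le> z \<Longrightarrow> 0 < G' z"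
    using assms unfolding cond_G1_def by blast
  show ?thesis
  proof (rule that)
    show "(G has_real_derivative G' z) (at z)" if "0 < z" for z
      using G'(1)[of z] that at_within_interior[of z "{0..}"] by simp
  qed (use G'(2,3) in auto)
qed

lemma cond_G1_continuous:
  assumes "cond_G1 G"
  shows "continuous_on {0..} G"
proof -
  obtain G' where "\<And>z. 0 \<le> z \<Longrightarrow> (G has_real_derivative G' z) (at z within {0..})"
    using assms unfolding cond_G1_def by blast
  then show ?thesis by (intro DERIV_continuous_on[where D = G']) auto
qed

lemma cond_G1_strict_mono:
  assumes "cond_G1 G" "0 \<le> q" "q < p"
  shows "G q < G p"
proof -
  obtain G' where G': "\<And>z. 0 < z \<Longrightarrow> (G has_real_derivative G' z) (at z)"
    "\<And>z. 0 < z \<Longrightarrow> 0 < G' z" "continuous_on {0..} G'"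
    using cond_G1_derivative[OF assms(1)] by blast
  have "\<exists>y. (G has_real_derivative y) (at x) \<and> 0 < y" if "q < x" for x
  proof -
    have "0 < x" using that assms(2) by linarith
    then show ?thesis using G' by blast
  qed
  moreover have "{q..p} \<subseteq> {0..}" using assms(2) by auto
  then have "continuous_on {q..p} G" by (rule continuous_on_subset[OF cond_G1_continuous[OF assms(1)]])
  ultimately show ?thesis by (intro DERIV_pos_imp_increasing_open[OF assms(3)]) auto
qed

lemma cond_G1_pos: "cond_G1 G \<Longrightarrow> 0 < z \<Longrightarrow> 0 < G z"
  using cond_G1_strict_mono[of G 0 z] cond_G1_zero[of G] by simp

lemma cond_G1_nonneg: "cond_G1 G \<Longrightarrow> 0 \<le> z \<Longrightarrow> 0 \<le> G z"
  using cond_G1_pos[of G z] cond_G1_zero[of G] by (cases "z = 0") auto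

lemma cond_G1_lipschitz:
  assumes "cond_G1 G" "0 \<le> B"
  obtains L where "0 \<le> L" "\<And>p q. 0 \<le> q \<Longrightarrow> q \<le> p \<Longrightarrow> p \<le> B \<Longrightarrow> G p - G q \<le> L * (p - q)"
proof -
  obtain G' where G': "\<And>z. 0 < z \<Longrightarrow> (G has_real_derivative G' z) (at z)"
    "\<And>z. 0 < z \<Longrightarrow> 0 < G' z" "continuous_on {0..} G'"
    using cond_G1_derivative[OF assms(1)] by blast
  have "compact (G' ` {0..B})"
    by (rule compact_continuous_image[OF continuous_on_subset[OF G'(3)]]) auto
  then have "bounded (G' ` {0..B})" by (rule compact_imp_bounded)
  then obtain L where "\<forall>y\<in>G' ` {0..B}. norm y \<le> L" unfolding bounded_iff by blast
  then have L: "\<And>z. z \<in> {0..B} \<Longrightarrow> norm (G' z) \<le> L" by blast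
  show ?thesis
  proof (rule that)
    show "0 \<le> L" using L[of 0] assms(2) norm_ge_zero order_trans by fastforce
    fix p q assume pq: "0 \<le> q" "q \<le> p" "p \<le> B"
    show "G p - G q \<le> L * (p - q)"
    proof (rule increment_le_if_deriv_le)
      fix x assume "q < x" "x < p"
      then show "\<exists>D. (G has_real_derivative D) (at x) \<and> D \<le> L"
        using pq G'(1)[of x] L[of x] by (intro exI[of _ "G' x"]) auto
    qed (use pq in \<open>auto intro: continuous_on_subset[OF cond_G1_continuous[OF assms(1)]]\<close>)
  qed
qed

section \<open>Nonnegativity, positivity and front speed of a solution\<close>

locale nonlocal_fbp =
  fixes d1 d2 a b e \<rho> \<mu> h0 :: real
    and J1 J2 W G u0 v0 g h :: "real \<Rightarrow> real"
    and u v :: "real \<Rightarrow> real \<Rightarrow> real"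
  assumes d1: "0 < d1" and d2: "0 < d2" and a: "0 < a" and b: "0 < b" and e: "0 < e"
    and rho: "0 < \<rho>" and h0: "0 < h0" and mu: "0 < \<mu>"
    and J1: "cond_J J1" and J2: "cond_J J2" and W: "cond_W W" and G: "cond_G1 G"
    and IC: "cond_IC h0 u0 v0"
    and sol: "sol_P d1 d2 a b e \<rho> \<mu> J1 J2 W G h0 u0 v0 u v g h"
begin

definition rhs_u :: "real \<Rightarrow> real \<Rightarrow> real" where
  "rhs_u t x = d1 * integral {g t..h t} (\<lambda>y. J1 (x - y) * u t y) - d1 * u t x - a * u t x + e * v t x"

definition rhs_v :: "real \<Rightarrow> real \<Rightarrow> real" where
  "rhs_v t x = d2 * integral {g t..h t} (\<lambda>y. J2 (x - y) * v t y) - d2 * v t x - b * v t x + G (u t x)"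

definition flux_h :: "real \<Rightarrow> real" where
  "flux_h t = integral {g t..h t} (\<lambda>x. u t x * W_J J1 (h t - x) + \<rho> * v t x * W (h t - x))"

definition flux_g :: "real \<Rightarrow> real" where
  "flux_g t = integral {g t..h t} (\<lambda>x. u t x * W_J J1 (x - g t) + \<rho> * v t x * W (x - g t))"

lemma g_continuous: "continuous_on {0..} g" and h_continuous: "continuous_on {0..} h"
  and g_0: "g 0 = - h0" and h_0: "h 0 = h0"
  and u_continuous: "continuous_on {(t, x). 0 \<le> t \<and> g t \<le> x \<and> x \<le> h t} (\<lambda>(t, x). u t x)"
  and v_continuous: "continuous_on {(t, x). 0 \<le> t \<and> g t \<le> x \<and> x \<le> h t} (\<lambda>(t, x). v t x)"
  and uv_boundary: "0 \<le> t \<Longrightarrow> u t (g t) = 0 \<and> u t (h t) = 0 \<and> v t (g t) = 0 \<and> v t (h t) = 0"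
  and uv_initial: "x \<in> {-h0..h0} \<Longrightarrow> u 0 x = u0 x \<and> v 0 x = v0 x"
  using sol unfolding sol_P_def by blast+

lemma u_deriv: "0 < t \<Longrightarrow> g t < x \<Longrightarrow> x < h t \<Longrightarrow> ((\<lambda>s. u s x) has_real_derivative rhs_u t x) (at t)"
  and v_deriv: "0 < t \<Longrightarrow> g t < x \<Longrightarrow> x < h t \<Longrightarrow> ((\<lambda>s. v s x) has_real_derivative rhs_v t x) (at t)"
  and h_deriv: "0 < t \<Longrightarrow> (h has_real_derivative \<mu> * flux_h t) (at t)"
  and g_deriv: "0 < t \<Longrightarrow> (g has_real_derivative - \<mu> * flux_g t) (at t)"
  using sol unfolding sol_P_def rhs_u_def rhs_v_def flux_h_def flux_g_def by blast+

lemma initial_pos: "-h0 < x \<Longrightarrow> x < h0 \<Longrightarrow> 0 < u 0 x \<and> 0 < v 0 x"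
  using IC uv_initial unfolding cond_IC_def by auto

lemma initial_nonneg: "0 \<le> u 0 x \<and> 0 \<le> v 0 x" if "x \<in> {-h0..h0}"
  using initial_pos[of x] uv_boundary[of 0] that g_0 h_0 by (cases "x = h0 \<or> x = -h0") auto

abbreviation U :: "real \<Rightarrow> real \<Rightarrow> real" where "U \<equiv> zero_ext g h u"
abbreviation V :: "real \<Rightarrow> real \<Rightarrow> real" where "V \<equiv> zero_ext g h v"

lemma U_continuous: "continuous_on ({0..} \<times> UNIV) (\<lambda>(t, x). U t x)"
  and V_continuous: "continuous_on ({0..} \<times> UNIV) (\<lambda>(t, x). V t x)"
  using uv_boundary
  by (auto intro!: continuous_on_zero_ext g_continuous h_continuous u_continuous v_continuous)

lemma U_continuous_time: "continuous_on {0..} (\<lambda>t. U t x)"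
  and V_continuous_time: "continuous_on {0..} (\<lambda>t. V t x)"
  by (rule continuous_on_compose2[OF U_continuous, of _ "\<lambda>t. (t, x)", simplified]
      continuous_on_compose2[OF V_continuous, of _ "\<lambda>t. (t, x)", simplified];
      auto intro!: continuous_intros)+

lemma U_continuous_space: "0 \<le> t \<Longrightarrow> continuous_on UNIV (U t)"
  and V_continuous_space: "0 \<le> t \<Longrightarrow> continuous_on UNIV (V t)"
  by (rule continuous_on_compose2[OF U_continuous, of _ "\<lambda>x. (t, x)", simplified]
      continuous_on_compose2[OF V_continuous, of _ "\<lambda>x. (t, x)", simplified];
      auto intro!: continuous_intros)+

lemma UV_boundary: "0 \<le> t \<Longrightarrow> x = g t \<or> x = h t \<Longrightarrow> U t x = 0 \<and> V t x = 0"
  using uv_boundary by (auto simp: zero_ext_def)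

lemma UV_outside_interior: "0 \<le> t \<Longrightarrow> \<not> (g t < x \<and> x < h t) \<Longrightarrow> U t x = 0 \<and> V t x = 0"
  using UV_boundary[of t x] by (auto simp: zero_ext_def)

lemma interior_persists:
  assumes "0 < t" "g t < x" "x < h t"
  obtains d where "0 < d" "\<And>s. dist s t < d \<Longrightarrow> 0 < s \<and> g s < x \<and> x < h s"
proof -
  have "continuous_on {0<..} g" "continuous_on {0<..} h"
    by (auto intro: continuous_on_subset[OF g_continuous] continuous_on_subset[OF h_continuous])
  then have "open ({0<..} \<inter> g -` {..<x} \<inter> ({0<..} \<inter> h -` {x<..}))"
    by (intro open_Int continuous_open_preimage) auto
  then obtain d where d: "0 < d" "ball t d \<subseteq> {0<..} \<inter> g -` {..<x} \<inter> ({0<..} \<inter> h -` {x<..})"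
    using assms by (meson IntI openE greaterThan_iff lessThan_iff vimageI)
  show ?thesis
  proof (rule that[OF d(1)])
    fix s assume "dist s t < d"
    then have "s \<in> ball t d" by (simp add: dist_commute)
    then show "0 < s \<and> g s < x \<and> x < h s" using d(2) by auto
  qed
qed

lemma U_deriv: "0 < t \<Longrightarrow> g t < x \<Longrightarrow> x < h t \<Longrightarrow> ((\<lambda>s. U s x) has_real_derivative rhs_u t x) (at t)"
  and V_deriv: "0 < t \<Longrightarrow> g t < x \<Longrightarrow> x < h t \<Longrightarrow> ((\<lambda>s. V s x) has_real_derivative rhs_v t x) (at t)"
proof -
  assume *: "0 < t" "g t < x" "x < h t"
  then obtain d where d: "0 < d" "\<And>s. dist s t < d \<Longrightarrow> 0 < s \<and> g s < x \<and> x < h s"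
    using interior_persists by blast
  then have "dist s t < d \<Longrightarrow> U s x = u s x \<and> V s x = v s x" for s
    by (simp add: zero_ext_inside less_imp_le)
  then show "((\<lambda>s. U s x) has_real_derivative rhs_u t x) (at t)"
    "((\<lambda>s. V s x) has_real_derivative rhs_v t x) (at t)"
    by (auto intro!: has_field_derivative_transform_within[OF u_deriv[OF *] d(1)]
      has_field_derivative_transform_within[OF v_deriv[OF *] d(1)])
qed

definition nonneg_at :: "real \<Rightarrow> bool" where
  "nonneg_at t \<longleftrightarrow> (\<forall>x. 0 \<le> U t x \<and> 0 \<le> V t x)"

lemma nonneg_at_uv: "nonneg_at t \<Longrightarrow> g t \<le> x \<Longrightarrow> x \<le> h t \<Longrightarrow> 0 \<le> u t x \<and> 0 \<le> v t x"
  unfolding nonneg_at_def by (metis zero_ext_inside)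

lemma flux_h_nonneg: "nonneg_at t \<Longrightarrow> 0 \<le> flux_h t"
  and flux_g_nonneg: "nonneg_at t \<Longrightarrow> 0 \<le> flux_g t"
  unfolding flux_h_def flux_g_def
  using nonneg_at_uv W_J_nonneg[OF J1] cond_W_nonneg[OF W] rho
  by (auto intro!: integral_nonneg_unconditional add_nonneg_nonneg mult_nonneg_nonneg)

lemma fronts_monotone:
  assumes "\<And>\<tau>. s < \<tau> \<Longrightarrow> \<tau> < t \<Longrightarrow> nonneg_at \<tau>" "0 \<le> s" "s \<le> t"
  shows "h s \<le> h t" "g t \<le> g s"
proof -
  show "h s \<le> h t"
  proof (rule DERIV_nonneg_imp_increasing_open[OF assms(3)])
    fix \<tau> assume "s < \<tau>" "\<tau> < t"
    then show "\<exists>y. (h has_real_derivative y) (at \<tau>) \<and> 0 \<le> y"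
      using h_deriv[of \<tau>] flux_h_nonneg[of \<tau>] assms(1,2) mu by (intro exI[of _ "\<mu> * flux_h \<tau>"]) auto
  qed (use assms(2) in \<open>auto intro!: continuous_on_subset[OF h_continuous]\<close>)
  show "g t \<le> g s"
  proof (rule DERIV_nonpos_imp_decreasing_open[OF assms(3)])
    fix \<tau> assume "s < \<tau>" "\<tau> < t"
    then show "\<exists>y. (g has_real_derivative y) (at \<tau>) \<and> y \<le> 0"
      using g_deriv[of \<tau>] flux_g_nonneg[of \<tau>] assms(1,2) mu by (intro exI[of _ "- \<mu> * flux_g \<tau>"]) auto
  qed (use assms(2) in \<open>auto intro!: continuous_on_subset[OF g_continuous]\<close>)
qed

lemma fronts_bounded_by_h0:
  assumes "\<forall>\<tau>\<in>{0..t}. nonneg_at \<tau>" "0 \<le> t"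
  shows "h0 \<le> h t" "g t \<le> - h0"
  using fronts_monotone[of 0 t] assms h_0 g_0 by auto

lemma u_continuous_space: "0 \<le> t \<Longrightarrow> continuous_on {g t..h t} (u t)"
  and v_continuous_space: "0 \<le> t \<Longrightarrow> continuous_on {g t..h t} (v t)"
  by (auto intro: continuous_on_eq[OF continuous_on_subset[OF U_continuous_space]]
      continuous_on_eq[OF continuous_on_subset[OF V_continuous_space]] simp: zero_ext_inside)

lemma nonlocal_integrals_nonneg:
  assumes "nonneg_at t" "cond_J J"
  shows "0 \<le> integral {g t..h t} (\<lambda>y. J (x - y) * u t y)"
    and "0 \<le> integral {g t..h t} (\<lambda>y. J (x - y) * v t y)"
  using nonneg_at_uv[OF assms(1)] cond_J_nonneg[OF assms(2)] by (auto intro!: integral_nonneg_unconditional)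

lemma exp_U_increasing:
  assumes "\<And>\<tau>. s < \<tau> \<Longrightarrow> \<tau> < t \<Longrightarrow> nonneg_at \<tau> \<and> g \<tau> < x \<and> x < h \<tau>" "0 \<le> s" "s \<le> t"
  shows "exp ((d1 + a) * s) * U s x \<le> exp ((d1 + a) * t) * U t x"
proof (rule DERIV_nonneg_imp_increasing_open[OF assms(3)])
  fix \<tau> assume \<tau>: "s < \<tau>" "\<tau> < t"
  then have nonneg: "nonneg_at \<tau>" and x: "g \<tau> < x" "x < h \<tau>" and "0 < \<tau>" using assms by auto
  let ?I = "integral {g \<tau>..h \<tau>} (\<lambda>y. J1 (x - y) * u \<tau> y)"
  have "((\<lambda>\<tau>. exp ((d1 + a) * \<tau>) * U \<tau> x) has_real_derivative
      exp ((d1 + a) * \<tau>) * ((d1 + a) * U \<tau> x + rhs_u \<tau> x)) (at \<tau>)"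
    by (rule derivative_eq_intros U_deriv[OF \<open>0 < \<tau>\<close> x] refl | simp add: algebra_simps)+
  moreover have "(d1 + a) * U \<tau> x + rhs_u \<tau> x = d1 * ?I + e * v \<tau> x"
    using x by (simp add: rhs_u_def zero_ext_inside algebra_simps)
  moreover have "0 \<le> d1 * ?I + e * v \<tau> x"
    using nonlocal_integrals_nonneg(1)[OF nonneg J1] nonneg_at_uv[OF nonneg] x d1 e by auto
  ultimately show "\<exists>y. ((\<lambda>\<tau>. exp ((d1 + a) * \<tau>) * U \<tau> x) has_real_derivative y) (at \<tau>) \<and> 0 \<le> y"
    by (metis exp_ge_zero mult_nonneg_nonneg)
qed (use assms(2) in \<open>auto intro!: continuous_intros continuous_on_subset[OF U_continuous_time]\<close>)

lemma u_pos_at_origin: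
  assumes nonneg: "\<forall>\<tau>\<in>{0..t}. nonneg_at \<tau>" and "0 \<le> t"
  shows "0 < u t 0"
proof -
  have "exp ((d1 + a) * 0) * U 0 0 \<le> exp ((d1 + a) * t) * U t 0"
  proof (rule exp_U_increasing)
    fix \<tau> assume \<tau>: "0 < \<tau>" "\<tau> < t"
    then have "\<forall>\<sigma>\<in>{0..\<tau>}. nonneg_at \<sigma>" using nonneg by auto
    then have "h0 \<le> h \<tau>" "g \<tau> \<le> - h0" using fronts_bounded_by_h0 \<tau> by auto
    then show "nonneg_at \<tau> \<and> g \<tau> < 0 \<and> 0 < h \<tau>" using nonneg \<tau> h0 by auto
  qed (use \<open>0 \<le> t\<close> in auto)
  moreover have "0 < U 0 0" using initial_pos[of 0] h0 g_0 h_0 by (simp add: zero_ext_inside)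
  ultimately have "0 < U t 0" by (smt (verit) exp_gt_zero mult_pos_pos mult_le_0_iff)
  moreover have "U t 0 = u t 0"
    using fronts_bounded_by_h0[OF nonneg \<open>0 \<le> t\<close>] h0 by (simp add: zero_ext_inside)
  ultimately show ?thesis by simp
qed

text \<open>At an interior zero of \<open>u\<close> at time \<open>t\<close>, \<open>u\<close> has a minimum from the left, so the right-hand
  side of its equation is nonpositive there; this forces the nonlocal term to vanish, hence \<open>u\<close>
  vanishes on a whole neighbourhood of the zero.\<close>

lemma u_zero_spreads:
  assumes nonneg: "\<forall>\<tau>\<in>{0..t}. nonneg_at \<tau>" and "0 < t"
    and y: "g t < y" "y < h t" "u t y = 0"
    and r: "\<And>z. \<bar>z\<bar> < r \<Longrightarrow> 0 < J1 z"
    and z: "g t < z" "z < h t" "\<bar>z - y\<bar> < r"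
  shows "u t z = 0"
proof (rule ccontr)
  assume "u t z \<noteq> 0"
  have nonneg_t: "nonneg_at t" using nonneg \<open>0 < t\<close> by auto
  then have "0 \<le> u t z" using nonneg_at_uv z by auto
  with \<open>u t z \<noteq> 0\<close> have "0 < u t z" by simp
  let ?I = "integral {g t..h t} (\<lambda>w. J1 (y - w) * u t w)"
  have "rhs_u t y \<le> 0"
  proof (rule DERIV_nonpos_if_left_ge[OF U_deriv[OF \<open>0 < t\<close> y(1,2)] \<open>0 < t\<close>])
    fix s assume "t - t < s" "s < t"
    then show "U t y \<le> U s y" using nonneg y by (auto simp: nonneg_at_def zero_ext_inside)
  qed
  moreover have "0 < ?I"
  proof (rule integral_pos_if_continuous)
    show "continuous_on {g t..h t} (\<lambda>w. J1 (y - w) * u t w)"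
      using \<open>0 < t\<close> by (intro continuous_intros continuous_on_compose2[OF cond_J_continuous[OF J1]]
        u_continuous_space) auto
    show "0 < J1 (y - z) * u t z" using r z(3) \<open>0 < u t z\<close> by (simp add: abs_minus_commute)
  qed (use z nonneg_at_uv[OF nonneg_t] cond_J_nonneg[OF J1] in auto)
  moreover have "0 \<le> v t y" using nonneg_at_uv[OF nonneg_t] y by auto
  ultimately show False using y(3) d1 e by (simp add: rhs_u_def) (smt (verit) mult_pos_pos mult_nonneg_nonneg)
qed

lemma no_interior_zero_of_u:
  assumes nonneg: "\<forall>\<tau>\<in>{0..t}. nonneg_at \<tau>" and "0 < t"
  shows "{y \<in> {g t<..<h t}. u t y = 0} = {}"
proof -
  let ?I = "{g t<..<h t}" and ?Z = "{y \<in> {g t<..<h t}. u t y = 0}"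
  obtain r where r: "0 < r" "\<And>z. \<bar>z\<bar> < r \<Longrightarrow> 0 < J1 z" using cond_J_pos_near_0[OF J1] by blast
  have "closedin (top_of_set ?I) ?Z"
    by (intro continuous_closedin_preimage_constant continuous_on_subset[OF u_continuous_space])
       (use \<open>0 < t\<close> in auto)
  moreover have "openin (top_of_set ?I) ?Z"
    unfolding openin_euclidean_subtopology_iff
  proof (intro conjI ballI)
    fix y assume "y \<in> ?Z"
    then show "\<exists>e>0. \<forall>z\<in>?I. dist z y < e \<longrightarrow> z \<in> ?Z"
      using u_zero_spreads[OF nonneg \<open>0 < t\<close> _ _ _ r(2)] r(1)
      by (intro exI[of _ r]) (auto simp: dist_real_def)
  qed auto
  moreover have "0 \<in> ?I - ?Z"
    using u_pos_at_origin[OF nonneg] fronts_bounded_by_h0[OF nonneg] h0 \<open>0 < t\<close> by auto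
  then have "?Z \<noteq> ?I" by blast
  ultimately show ?thesis
    using connected_clopen[THEN iffD1, rule_format, of ?I ?Z] by auto
qed

lemma uv_pos_if_nonneg_before:
  assumes nonneg: "\<forall>\<tau>\<in>{0..t}. nonneg_at \<tau>" and "0 \<le> t" and x: "g t < x" "x < h t"
  shows "0 < u t x \<and> 0 < v t x"
proof (cases "t = 0")
  case True
  then show ?thesis using initial_pos x g_0 h_0 by simp
next
  case False
  then have "0 < t" using \<open>0 \<le> t\<close> by simp
  have nonneg_t: "nonneg_at t" using nonneg \<open>0 \<le> t\<close> by auto
  have "0 \<le> u t x" "0 \<le> v t x" using nonneg_at_uv[OF nonneg_t] x by auto
  moreover have "u t x \<noteq> 0" using no_interior_zero_of_u[OF nonneg \<open>0 < t\<close>] x by auto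
  ultimately have "0 < u t x" by simp
  moreover have "v t x \<noteq> 0"
  proof
    assume "v t x = 0"
    have "rhs_v t x \<le> 0"
    proof (rule DERIV_nonpos_if_left_ge[OF V_deriv[OF \<open>0 < t\<close> x] \<open>0 < t\<close>])
      fix s assume "t - t < s" "s < t"
      then show "V t x \<le> V s x"
        using nonneg x \<open>v t x = 0\<close> by (auto simp: nonneg_at_def zero_ext_inside)
    qed
    moreover have "0 \<le> d2 * integral {g t..h t} (\<lambda>y. J2 (x - y) * v t y)"
      using nonlocal_integrals_nonneg(2)[OF nonneg_t J2] d2 by simp
    ultimately show False
      using cond_G1_pos[OF G \<open>0 < u t x\<close>] \<open>v t x = 0\<close> by (simp add: rhs_v_def)
  qed
  ultimately show ?thesis using \<open>0 \<le> v t x\<close> by simp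
qed

lemma domain_bounded:
  assumes "0 \<le> T"
  obtains R where "0 < R" "\<And>t. t \<in> {0..T} \<Longrightarrow> -R \<le> g t \<and> h t \<le> R"
proof -
  have "compact (g ` {0..T})" "compact (h ` {0..T})"
    by (auto intro!: compact_continuous_image continuous_on_subset[OF g_continuous]
        continuous_on_subset[OF h_continuous])
  then have "bounded (g ` {0..T})" "bounded (h ` {0..T})" by (simp_all add: compact_imp_bounded)
  then obtain Rg Rh where Rg: "\<forall>y\<in>g ` {0..T}. norm y \<le> Rg" and Rh: "\<forall>y\<in>h ` {0..T}. norm y \<le> Rh"
    unfolding bounded_iff by blast
  have "-(\<bar>Rg\<bar> + \<bar>Rh\<bar> + 1) \<le> g t \<and> h t \<le> \<bar>Rg\<bar> + \<bar>Rh\<bar> + 1" if "t \<in> {0..T}" for t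
    using Rg[rule_format, OF imageI[OF that]] Rh[rule_format, OF imageI[OF that]] by auto
  moreover have "0 < \<bar>Rg\<bar> + \<bar>Rh\<bar> + 1" by (simp add: add_nonneg_pos)
  ultimately show ?thesis using that by blast
qed

text \<open>The reaction term \<open>G(u)\<close> is left out since its sign is not controlled where \<open>u < 0\<close>; what
  remains is continuous in \<open>(t, x)\<close> and, by the positivity of the nonlocal terms, positive on the
  free boundary.\<close>

definition source :: "real \<Rightarrow> real \<Rightarrow> real \<Rightarrow> real" where
  "source R t x = min (d1 * conv R J1 (U t) x - (d1 + a) * U t x + e * V t x)
                      (d2 * conv R J2 (V t) x - (d2 + b) * V t x)"

lemma rhs_conv:
  assumes "-R \<le> g t" "h t \<le> R" "g t \<le> x" "x \<le> h t"
  shows "rhs_u t x = d1 * conv R J1 (U t) x - (d1 + a) * U t x + e * V t x"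
    and "rhs_v t x = d2 * conv R J2 (V t) x - (d2 + b) * V t x + G (U t x)"
  using assms integral_zero_ext[of R g t h "\<lambda>y. J1 (x - y)" u]
    integral_zero_ext[of R g t h "\<lambda>y. J2 (x - y)" v]
  by (simp_all add: rhs_u_def rhs_v_def conv_def zero_ext_inside algebra_simps)

lemma source_continuous: "continuous_on ({0..} \<times> UNIV) (\<lambda>(t, x). source R t x)"
proof -
  have "continuous_on ({0..} \<times> UNIV) (\<lambda>(t, x). conv R J1 (U t) x)"
    "continuous_on ({0..} \<times> UNIV) (\<lambda>(t, x). conv R J2 (V t) x)"
    by (intro continuous_on_conv cond_J_continuous J1 J2 U_continuous V_continuous)+
  then show ?thesis
    using U_continuous V_continuous unfolding source_def case_prod_beta'
    by (intro continuous_intros) auto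
qed

lemma source_pos_at_boundary:
  assumes nonneg: "\<forall>\<tau>\<in>{0..t}. nonneg_at \<tau>" and "0 \<le> t"
    and R: "-R \<le> g t" "h t \<le> R" and x: "x = g t \<or> x = h t"
  shows "0 < source R t x"
proof -
  have nonneg_t: "nonneg_at t" using nonneg \<open>0 \<le> t\<close> by auto
  have gh: "g t < h t" using fronts_bounded_by_h0[OF nonneg \<open>0 \<le> t\<close>] h0 by linarith
  have pos: "0 < U t y" "0 < V t y" if "g t < y" "y < h t" for y
    using uv_pos_if_nonneg_before[OF nonneg \<open>0 \<le> t\<close> that] that by (simp_all add: zero_ext_inside)
  have x_in: "x \<in> {g t..h t}" using x gh by auto
  obtain r1 where r1: "0 < r1" "\<And>z. \<bar>z\<bar> < r1 \<Longrightarrow> 0 < J1 z" using cond_J_pos_near_0[OF J1] by blast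
  obtain r2 where r2: "0 < r2" "\<And>z. \<bar>z\<bar> < r2 \<Longrightarrow> 0 < J2 z" using cond_J_pos_near_0[OF J2] by blast
  have "0 < conv R J1 (U t) x"
    by (rule conv_pos[OF cond_J_continuous[OF J1] cond_J_nonneg[OF J1] r1 _ _ pos(1) gh R x_in])
       (use nonneg_t \<open>0 \<le> t\<close> in \<open>auto intro: continuous_on_subset[OF U_continuous_space] simp: nonneg_at_def\<close>)
  moreover have "0 < conv R J2 (V t) x"
    by (rule conv_pos[OF cond_J_continuous[OF J2] cond_J_nonneg[OF J2] r2 _ _ pos(2) gh R x_in])
       (use nonneg_t \<open>0 \<le> t\<close> in \<open>auto intro: continuous_on_subset[OF V_continuous_space] simp: nonneg_at_def\<close>)
  ultimately show ?thesis using UV_boundary[OF \<open>0 \<le> t\<close> x] d1 d2 by (simp add: source_def)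
qed

lemma fronts_near:
  assumes "0 \<le> t" "0 < \<epsilon>"
  obtains d where "0 < d" "\<And>s. 0 \<le> s \<Longrightarrow> \<bar>s - t\<bar> < d \<Longrightarrow> \<bar>g s - g t\<bar> < \<epsilon> \<and> \<bar>h s - h t\<bar> < \<epsilon>"
proof -
  obtain dg where "0 < dg" "\<And>s. s \<in> {0..} \<Longrightarrow> dist s t < dg \<Longrightarrow> dist (g s) (g t) < \<epsilon>"
    using g_continuous assms unfolding continuous_on_iff by (metis atLeast_iff)
  moreover obtain dh where "0 < dh" "\<And>s. s \<in> {0..} \<Longrightarrow> dist s t < dh \<Longrightarrow> dist (h s) (h t) < \<epsilon>"
    using h_continuous assms unfolding continuous_on_iff by (metis atLeast_iff)
  ultimately show ?thesis using that[of "min dg dh"] by (simp add: dist_real_def)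
qed

text \<open>The compact segment \<open>{t} \<times> [g t, h t]\<close> has positive distance from the closed set where
  both alternatives fail, and the fronts move continuously.\<close>

lemma source_or_uv_pos_near:
  assumes nonneg: "\<forall>\<tau>\<in>{0..t}. nonneg_at \<tau>" and "0 \<le> t"
    and R: "\<And>s. s \<in> {0..t + 1} \<Longrightarrow> -R \<le> g s \<and> h s \<le> R"
  obtains \<eta> where "0 < \<eta>" "\<eta> \<le> 1"
    "\<And>s x. t \<le> s \<Longrightarrow> s \<le> t + \<eta> \<Longrightarrow> g s < x \<Longrightarrow> x < h s \<Longrightarrow>
      0 < source R s x \<or> (0 < U s x \<and> 0 < V s x)"
proof -
  let ?box = "{t..t + 1} \<times> {-R..R}" and ?seg = "{t} \<times> {g t..h t}"
    and ?m = "\<lambda>(s, x). max (source R s x) (min (U s x) (V s x))"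
  define F where "F = ?box \<inter> ?m -` {..0}"
  have "continuous_on ?box ?m"
    using source_continuous[of R] U_continuous V_continuous \<open>0 \<le> t\<close> unfolding case_prod_beta'
    by (intro continuous_intros) (auto intro: continuous_on_subset)
  then have "closed F" unfolding F_def by (rule continuous_closed_preimage) (auto intro: closed_Times)
  moreover have "?seg \<inter> F = {}"
  proof -
    have "0 < ?m (t, x)" if "x \<in> {g t..h t}" for x
      using source_pos_at_boundary[OF nonneg \<open>0 \<le> t\<close>, of R x] R[of t] \<open>0 \<le> t\<close> that
        uv_pos_if_nonneg_before[OF nonneg \<open>0 \<le> t\<close>, of x]
      by (cases "x = g t \<or> x = h t") (auto simp: zero_ext_inside)
    then show ?thesis by (force simp: F_def)
  qed
  moreover have "compact ?seg" by (intro compact_Times compact_Icc compact_sing)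
  ultimately obtain \<delta> where \<delta>: "0 < \<delta>" "\<And>p q. p \<in> ?seg \<Longrightarrow> q \<in> F \<Longrightarrow> \<delta> \<le> dist p q"
    using separate_compact_closed[of ?seg F] by blast
  obtain d where d: "0 < d" "\<And>s. 0 \<le> s \<Longrightarrow> \<bar>s - t\<bar> < d \<Longrightarrow> \<bar>g s - g t\<bar> < \<delta> / 2 \<and> \<bar>h s - h t\<bar> < \<delta> / 2"
    using fronts_near[OF \<open>0 \<le> t\<close>, of "\<delta> / 2"] \<delta>(1) by auto
  define \<eta> where "\<eta> = min 1 (min (\<delta> / 2) d) / 2"
  show ?thesis
  proof (rule that[of \<eta>])
    fix s x assume s: "t \<le> s" "s \<le> t + \<eta>" and x: "g s < x" "x < h s"
    have "g t \<le> h t" using fronts_bounded_by_h0[OF nonneg \<open>0 \<le> t\<close>] h0 by linarith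
    moreover have "\<bar>s - t\<bar> < d" "\<bar>s - t\<bar> < \<delta> / 2" using s d(1) \<delta>(1) by (auto simp: \<eta>_def)
    ultimately obtain x' where "x' \<in> {g t..h t}" "dist (s, x) (t, x') < \<delta>"
      using close_point_in_interval[of "g t" "h t" s t \<delta> "g s" "h s" x] d(2)[of s] s x \<open>0 \<le> t\<close> by auto
    then have "(s, x) \<notin> F" using \<delta>(2)[of "(t, x')" "(s, x)"] by (auto simp: dist_commute)
    moreover have "s \<le> t + 1" using s(2) by (simp add: \<eta>_def)
    then have "(s, x) \<in> ?box" using R[of s] s(1) x \<open>0 \<le> t\<close> by auto
    ultimately show "0 < source R s x \<or> (0 < U s x \<and> 0 < V s x)" by (auto simp: F_def)
  qed (use \<delta>(1) d(1) in \<open>auto simp: \<eta>_def\<close>)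
qed

lemma nonneg_continues:
  assumes nonneg: "\<forall>\<tau>\<in>{0..t}. nonneg_at \<tau>" and "0 \<le> t"
  obtains \<eta> where "0 < \<eta>" "\<And>s. t < s \<Longrightarrow> s < t + \<eta> \<Longrightarrow> nonneg_at s"
proof -
  obtain R where R: "\<And>s. s \<in> {0..t + 1} \<Longrightarrow> -R \<le> g s \<and> h s \<le> R"
    using domain_bounded[of "t + 1"] \<open>0 \<le> t\<close> by auto
  obtain \<eta> where \<eta>: "0 < \<eta>" "\<eta> \<le> 1"
    "\<And>s x. t \<le> s \<Longrightarrow> s \<le> t + \<eta> \<Longrightarrow> g s < x \<Longrightarrow> x < h s \<Longrightarrow> 0 < source R s x \<or> (0 < U s x \<and> 0 < V s x)"
    using source_or_uv_pos_near[OF nonneg \<open>0 \<le> t\<close> R] by blast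
  have at_t: "0 \<le> U t x" "0 \<le> V t x" for x using nonneg \<open>0 \<le> t\<close> by (auto simp: nonneg_at_def)
  have rhs_ge_source: "source R s x \<le> rhs_u s x \<and> source R s x + G (U s x) \<le> rhs_v s x"
    if "t < s" "s \<le> t + \<eta>" "g s < x" "x < h s" for s x
    using rhs_conv[of R s x] R[of s] that \<open>0 \<le> t\<close> \<eta>(2) by (auto simp: source_def)
  have neg_point: "0 < \<sigma> \<and> g \<sigma> < x \<and> x < h \<sigma> \<and> 0 < source R \<sigma> x"
    if "t < \<sigma>" "\<sigma> \<le> t + \<eta>" "U \<sigma> x < 0 \<or> V \<sigma> x < 0" for \<sigma> x
  proof -
    have "g \<sigma> < x \<and> x < h \<sigma>"
      using UV_outside_interior[of \<sigma> x] that \<open>0 \<le> t\<close> by (metis less_irrefl order.strict_trans1 less_imp_le)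
    moreover have "\<not> (0 < U \<sigma> x \<and> 0 < V \<sigma> x)" using that(3) by auto
    ultimately show ?thesis using \<eta>(3)[of \<sigma> x] that(1,2) \<open>0 \<le> t\<close> by auto
  qed
  have U: "0 \<le> U s x" if "t \<le> s" "s \<le> t + \<eta>" for s x
  proof (rule nonneg_if_deriv_nonneg_where_neg[where \<phi> = "\<lambda>s. U s x", OF that(1) _ at_t(1)])
    show "continuous_on {t..s} (\<lambda>s. U s x)" using \<open>0 \<le> t\<close> by (auto intro: continuous_on_subset[OF U_continuous_time])
    fix \<sigma> assume \<sigma>: "t < \<sigma>" "\<sigma> < s" "U \<sigma> x < 0"
    then have "0 < \<sigma>" "g \<sigma> < x \<and> x < h \<sigma>" "0 < source R \<sigma> x"
      using neg_point[of \<sigma> x] that by auto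
    then show "\<exists>D. ((\<lambda>s. U s x) has_real_derivative D) (at \<sigma>) \<and> 0 \<le> D"
      using U_deriv[of \<sigma> x] rhs_ge_source[of \<sigma> x] \<sigma> that
      by (intro exI[of _ "rhs_u \<sigma> x"]) auto
  qed
  have V: "0 \<le> V s x" if "t \<le> s" "s \<le> t + \<eta>" for s x
  proof (rule nonneg_if_deriv_nonneg_where_neg[where \<phi> = "\<lambda>s. V s x", OF that(1) _ at_t(2)])
    show "continuous_on {t..s} (\<lambda>s. V s x)" using \<open>0 \<le> t\<close> by (auto intro: continuous_on_subset[OF V_continuous_time])
    fix \<sigma> assume \<sigma>: "t < \<sigma>" "\<sigma> < s" "V \<sigma> x < 0"
    then have "0 < \<sigma>" "g \<sigma> < x \<and> x < h \<sigma>" "0 < source R \<sigma> x"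
      using neg_point[of \<sigma> x] that by auto
    moreover have "0 \<le> G (U \<sigma> x)" using cond_G1_nonneg[OF G U[of \<sigma> x]] \<sigma> that by simp
    ultimately show "\<exists>D. ((\<lambda>s. V s x) has_real_derivative D) (at \<sigma>) \<and> 0 \<le> D"
      using V_deriv[of \<sigma> x] rhs_ge_source[of \<sigma> x] \<sigma> that
      by (intro exI[of _ "rhs_v \<sigma> x"]) auto
  qed
  show ?thesis using that[OF \<eta>(1)] U V by (simp add: nonneg_at_def)
qed

lemma nonneg_everywhere: "0 \<le> t \<Longrightarrow> nonneg_at t"
proof (rule real_continuous_induction[of nonneg_at 0 t])
  show "nonneg_at 0"
    using initial_nonneg g_0 h_0 by (auto simp: nonneg_at_def zero_ext_def)
next
  fix \<tau> assume "0 < \<tau>" "\<tau> \<le> t" and before: "\<And>s. 0 \<le> s \<Longrightarrow> s < \<tau> \<Longrightarrow> nonneg_at s"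
  have "0 \<le> U \<tau> x \<and> 0 \<le> V \<tau> x" for x
  proof
    show "0 \<le> U \<tau> x"
      by (rule nonneg_at_if_nonneg_before[OF continuous_on_subset[OF U_continuous_time] \<open>0 < \<tau>\<close>])
         (use before in \<open>auto simp: nonneg_at_def\<close>)
    show "0 \<le> V \<tau> x"
      by (rule nonneg_at_if_nonneg_before[OF continuous_on_subset[OF V_continuous_time] \<open>0 < \<tau>\<close>])
         (use before in \<open>auto simp: nonneg_at_def\<close>)
  qed
  then show "nonneg_at \<tau>" by (simp add: nonneg_at_def)
next
  fix \<tau> assume "0 \<le> \<tau>" "\<And>s. 0 \<le> s \<Longrightarrow> s \<le> \<tau> \<Longrightarrow> nonneg_at s"
  then obtain \<eta> where "0 < \<eta>" "\<And>s. \<tau> < s \<Longrightarrow> s < \<tau> + \<eta> \<Longrightarrow> nonneg_at s"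
    using nonneg_continues[of \<tau>] by auto
  then show "\<exists>\<eta>>0. \<forall>s. \<tau> < s \<and> s < \<tau> + \<eta> \<longrightarrow> nonneg_at s" by blast
qed simp

lemma U_nonneg: "0 \<le> t \<Longrightarrow> 0 \<le> U t x"
  and V_nonneg: "0 \<le> t \<Longrightarrow> 0 \<le> V t x"
  and uv_nonneg: "0 \<le> t \<Longrightarrow> g t \<le> x \<Longrightarrow> x \<le> h t \<Longrightarrow> 0 \<le> u t x \<and> 0 \<le> v t x"
  using nonneg_everywhere nonneg_at_uv by (auto simp: nonneg_at_def)

lemma h_ge_h0: "0 \<le> t \<Longrightarrow> h0 \<le> h t"
  and g_le_neg_h0: "0 \<le> t \<Longrightarrow> g t \<le> - h0"
  and uv_pos: "0 \<le> t \<Longrightarrow> g t < x \<Longrightarrow> x < h t \<Longrightarrow> 0 < u t x \<and> 0 < v t x"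
  using fronts_bounded_by_h0 uv_pos_if_nonneg_before nonneg_everywhere by auto

lemma flux_lower_bounds:
  assumes "0 \<le> t" "-R \<le> g t" "h t \<le> R"
  shows "integral {-R..R} (\<lambda>x. W_J J1 (h t - x) * U t x) \<le> flux_h t"
    and "integral {-R..R} (\<lambda>x. W_J J1 (x - g t) * U t x) \<le> flux_g t"
proof -
  have cu: "continuous_on {g t..h t} (u t)" "continuous_on {g t..h t} (v t)"
    using u_continuous_space v_continuous_space assms(1) by auto
  have WJ: "continuous_on {g t..h t} (\<lambda>x. W_J J1 (h t - x))" "continuous_on {g t..h t} (\<lambda>x. W_J J1 (x - g t))"
    by (rule continuous_on_compose2[OF W_J_continuous[OF J1]]; auto intro!: continuous_intros)+
  have Wc: "continuous_on {g t..h t} (\<lambda>x. W_clamped W (h t - x))"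
    "continuous_on {g t..h t} (\<lambda>x. W_clamped W (x - g t))"
    by (rule continuous_on_compose2[OF W_clamped_continuous[OF W]]; auto intro!: continuous_intros)+
  have W': "continuous_on {g t..h t} (\<lambda>x. W (h t - x))" "continuous_on {g t..h t} (\<lambda>x. W (x - g t))"
    by (rule continuous_on_eq[OF Wc(1)] continuous_on_eq[OF Wc(2)]; simp add: W_clamped_eq)+
  have extra: "0 \<le> \<rho> * v t x * W (h t - x)" "0 \<le> \<rho> * v t x * W (x - g t)" if "x \<in> {g t..h t}" for x
    using uv_nonneg[OF assms(1)] cond_W_nonneg[OF W] rho that by auto
  have "integral {g t..h t} (\<lambda>x. W_J J1 (h t - x) * u t x) \<le> flux_h t"
    unfolding flux_h_def
    by (rule integral_le) (use extra(1) in \<open>auto intro!: integrable_continuous_interval continuous_intros cu WJ W'\<close>)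
  then show "integral {-R..R} (\<lambda>x. W_J J1 (h t - x) * U t x) \<le> flux_h t"
    using integral_zero_ext[of R g t h "\<lambda>x. W_J J1 (h t - x)" u] assms by simp
  have "integral {g t..h t} (\<lambda>x. W_J J1 (x - g t) * u t x) \<le> flux_g t"
    unfolding flux_g_def
    by (rule integral_le) (use extra(2) in \<open>auto intro!: integrable_continuous_interval continuous_intros cu WJ W'\<close>)
  then show "integral {-R..R} (\<lambda>x. W_J J1 (x - g t) * U t x) \<le> flux_g t"
    using integral_zero_ext[of R g t h "\<lambda>x. W_J J1 (x - g t)" u] assms by simp
qed

lemma flux_lower_bounds_pos:
  assumes "0 \<le> t" "-R \<le> g t" "h t \<le> R"
  shows "0 < integral {-R..R} (\<lambda>x. W_J J1 (h t - x) * U t x)"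
    and "0 < integral {-R..R} (\<lambda>x. W_J J1 (x - g t) * U t x)"
proof -
  obtain r where r: "0 < r" "\<And>y. y < r \<Longrightarrow> 0 < W_J J1 y" using W_J_pos_near_0[OF J1] by blast
  define m where "m = min (r / 2) ((h t - g t) / 2)"
  have "g t < h t" using h_ge_h0 g_le_neg_h0 h0 assms(1) by (smt (verit))
  then have m: "0 < m" "m < r" "m < h t - g t" using r(1) by (auto simp: m_def min_def)
  have "continuous_on {-R..R} (\<lambda>x. W_J J1 (h t - x))" "continuous_on {-R..R} (\<lambda>x. W_J J1 (x - g t))"
    by (rule continuous_on_compose2[OF W_J_continuous[OF J1]]; auto intro!: continuous_intros)+
  then have cont: "continuous_on {-R..R} (\<lambda>x. W_J J1 (h t - x) * U t x)"
    "continuous_on {-R..R} (\<lambda>x. W_J J1 (x - g t) * U t x)"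
    using continuous_on_subset[OF U_continuous_space[OF assms(1)]] by (auto intro!: continuous_intros)
  have nonneg: "0 \<le> W_J J1 y * U t x" for y x using W_J_nonneg[OF J1] U_nonneg[OF assms(1)] by simp
  have pos: "0 < U t x" if "g t < x" "x < h t" for x
    using uv_pos[OF assms(1) that] that by (simp add: zero_ext_inside)
  show "0 < integral {-R..R} (\<lambda>x. W_J J1 (h t - x) * U t x)"
    by (rule integral_pos_if_continuous[OF cont(1), where y = "h t - m"])
       (use m assms r(2)[of m] pos[of "h t - m"] nonneg in auto)
  show "0 < integral {-R..R} (\<lambda>x. W_J J1 (x - g t) * U t x)"
    by (rule integral_pos_if_continuous[OF cont(2), where y = "g t + m"])
       (use m assms r(2)[of m] pos[of "g t + m"] nonneg in auto)
qed

text \<open>Since \<open>u > 0\<close> inside and \<open>W_J\<close> is positive near \<open>0\<close>, the fluxes are positive; continuity in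
  time makes the bound uniform on compact intervals.\<close>

lemma fluxes_uniformly_pos:
  assumes "0 \<le> T"
  obtains m where "0 < m" "\<And>t. t \<in> {0..T} \<Longrightarrow> m \<le> flux_h t \<and> m \<le> flux_g t"
proof -
  obtain R where R: "\<And>t. t \<in> {0..T} \<Longrightarrow> -R \<le> g t \<and> h t \<le> R" using domain_bounded[OF assms] by blast
  have cU: "continuous_on ({0..T} \<times> {-R..R}) (\<lambda>(t, x). U t x)"
    by (rule continuous_on_subset[OF U_continuous]) auto
  have "continuous_on ({0..T} \<times> {-R..R}) (\<lambda>(t, x). W_J J1 (h t - x))"
    "continuous_on ({0..T} \<times> {-R..R}) (\<lambda>(t, x). W_J J1 (x - g t))"
    unfolding case_prod_beta'
    by (rule continuous_on_compose2[OF W_J_continuous[OF J1]];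
        auto intro!: continuous_intros continuous_on_compose2[OF h_continuous]
          continuous_on_compose2[OF g_continuous])+
  with cU have cont: "continuous_on ({0..T} \<times> {-R..R}) (\<lambda>(t, x). W_J J1 (h t - x) * U t x)"
    "continuous_on ({0..T} \<times> {-R..R}) (\<lambda>(t, x). W_J J1 (x - g t) * U t x)"
    unfolding case_prod_beta' by (auto intro: continuous_on_mult)
  have pos: "0 < integral {-R..R} (\<lambda>x. W_J J1 (h t - x) * U t x)"
    "0 < integral {-R..R} (\<lambda>x. W_J J1 (x - g t) * U t x)" if "t \<in> {0..T}" for t
    using flux_lower_bounds_pos[of t R] R[OF that] that by auto
  obtain mh where mh: "0 < mh" "\<And>t. t \<in> {0..T} \<Longrightarrow> mh \<le> integral {-R..R} (\<lambda>x. W_J J1 (h t - x) * U t x)"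
    using integral_param_uniformly_pos[where f = "\<lambda>t x. W_J J1 (h t - x) * U t x", OF cont(1) assms pos(1)]
    by blast
  obtain mg where mg: "0 < mg" "\<And>t. t \<in> {0..T} \<Longrightarrow> mg \<le> integral {-R..R} (\<lambda>x. W_J J1 (x - g t) * U t x)"
    using integral_param_uniformly_pos[where f = "\<lambda>t x. W_J J1 (x - g t) * U t x", OF cont(2) assms pos(2)]
    by blast
  show ?thesis
  proof (rule that[of "min mh mg"])
    show "0 < min mh mg" using mh(1) mg(1) by simp
    fix t assume "t \<in> {0..T}"
    then show "min mh mg \<le> flux_h t \<and> min mh mg \<le> flux_g t"
      using flux_lower_bounds[of t R] mh(2) mg(2) R by fastforce
  qed
qed

lemma fronts_speed_bound:
  assumes "0 \<le> T"
  obtains \<delta> where "0 < \<delta>"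
    "\<And>s t. 0 \<le> s \<Longrightarrow> s \<le> t \<Longrightarrow> t \<le> T \<Longrightarrow> \<delta> * (t - s) \<le> h t - h s \<and> \<delta> * (t - s) \<le> g s - g t"
proof -
  obtain m where m: "0 < m" "\<And>t. t \<in> {0..T} \<Longrightarrow> m \<le> flux_h t \<and> m \<le> flux_g t"
    using fluxes_uniformly_pos[OF assms] by blast
  have h': "(h has_real_derivative \<mu> * flux_h \<tau>) (at \<tau>)"
    and g': "((\<lambda>\<tau>. - g \<tau>) has_real_derivative \<mu> * flux_g \<tau>) (at \<tau>)" if "0 < \<tau>" for \<tau>
    using h_deriv[OF that] DERIV_minus[OF g_deriv[OF that]] by simp_all
  show ?thesis
  proof (rule that)
    show "0 < \<mu> * m" using mu m(1) by simp
    fix s t assume st: "0 \<le> s" "s \<le> t" "t \<le> T"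
    then have bound: "\<mu> * m \<le> \<mu> * flux_h \<tau>" "\<mu> * m \<le> \<mu> * flux_g \<tau>" if "s < \<tau>" "\<tau> < t" for \<tau>
      using m(2)[of \<tau>] that mu by auto
    have "\<mu> * m * (t - s) \<le> h t - h s"
    proof (rule increment_ge_if_deriv_ge[OF st(2)])
      fix \<tau> assume "s < \<tau>" "\<tau> < t"
      then show "\<exists>D. (h has_real_derivative D) (at \<tau>) \<and> \<mu> * m \<le> D"
        using h' bound(1) st by (intro exI[of _ "\<mu> * flux_h \<tau>"]) auto
    qed (use st in \<open>auto intro: continuous_on_subset[OF h_continuous]\<close>)
    moreover have "\<mu> * m * (t - s) \<le> - g t - - g s"
    proof (rule increment_ge_if_deriv_ge[OF st(2)])
      fix \<tau> assume "s < \<tau>" "\<tau> < t"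
      then show "\<exists>D. ((\<lambda>\<tau>. - g \<tau>) has_real_derivative D) (at \<tau>) \<and> \<mu> * m \<le> D"
        using g' bound(2) st by (intro exI[of _ "\<mu> * flux_g \<tau>"]) auto
    qed (use st in \<open>auto intro!: continuous_intros intro: continuous_on_subset[OF g_continuous]\<close>)
    ultimately show "\<mu> * m * (t - s) \<le> h t - h s \<and> \<mu> * m * (t - s) \<le> g s - g t" by simp
  qed
qed

lemma fronts_strictly_monotone:
  assumes "0 \<le> s" "s < t"
  shows "h s < h t" "g t < g s"
proof -
  have "0 \<le> t" using assms by simp
  then obtain \<delta> where \<delta>: "0 < \<delta>"
    "\<And>s t'. 0 \<le> s \<Longrightarrow> s \<le> t' \<Longrightarrow> t' \<le> t \<Longrightarrow> \<delta> * (t' - s) \<le> h t' - h s \<and> \<delta> * (t' - s) \<le> g s - g t'"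
    using fronts_speed_bound by blast
  then have "\<delta> * (t - s) \<le> h t - h s" "\<delta> * (t - s) \<le> g s - g t" using assms by auto
  moreover have "0 < \<delta> * (t - s)" using \<delta>(1) assms by simp
  ultimately show "h s < h t" "g t < g s" by linarith+
qed

lemma h_entry_time:
  assumes "0 \<le> t" "h0 \<le> x" "x < h t"
  obtains s where "0 \<le> s" "s < t" "h s = x" "\<And>\<tau>. s < \<tau> \<Longrightarrow> x < h \<tau>"
proof -
  obtain s where s: "s \<in> {0..t}" "h s = x"
    using IVT'[of h 0 x t] assms h_0 continuous_on_subset[OF h_continuous, of "{0..t}"] by auto
  then have "s < t" using assms(3) by (cases "s = t") auto
  then show ?thesis using that[of s] s fronts_strictly_monotone(1)[of s] by auto
qed

lemma g_entry_time:
  assumes "0 \<le> t" "x \<le> - h0" "g t < x"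
  obtains s where "0 \<le> s" "s < t" "g s = x" "\<And>\<tau>. s < \<tau> \<Longrightarrow> g \<tau> < x"
proof -
  obtain s where s: "s \<in> {0..t}" "g s = x"
    using IVT2'[of g t x 0] assms g_0 continuous_on_subset[OF g_continuous, of "{0..t}"] by auto
  then have "s < t" using assms(3) by (cases "s = t") auto
  then show ?thesis using that[of s] s fronts_strictly_monotone(2)[of s] by auto
qed

lemma UV_bounded:
  assumes "0 \<le> T"
  obtains B where "0 < B" "\<And>t x. t \<in> {0..T} \<Longrightarrow> U t x \<le> B \<and> V t x \<le> B"
proof -
  obtain R where R: "\<And>t. t \<in> {0..T} \<Longrightarrow> -R \<le> g t \<and> h t \<le> R" using domain_bounded[OF assms] by blast
  let ?S = "{0..T} \<times> {-R..R}"
  have "compact ((\<lambda>(t, x). U t x) ` ?S)" "compact ((\<lambda>(t, x). V t x) ` ?S)"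
    by (auto intro!: compact_continuous_image compact_Times continuous_on_subset[OF U_continuous]
        continuous_on_subset[OF V_continuous])
  then have "bounded ((\<lambda>(t, x). U t x) ` ?S)" "bounded ((\<lambda>(t, x). V t x) ` ?S)"
    by (simp_all add: compact_imp_bounded)
  then obtain BU BV where BU: "\<forall>y\<in>(\<lambda>(t, x). U t x) ` ?S. norm y \<le> BU"
    and BV: "\<forall>y\<in>(\<lambda>(t, x). V t x) ` ?S. norm y \<le> BV"
    unfolding bounded_iff by blast
  have "U t x \<le> max 1 (max BU BV) \<and> V t x \<le> max 1 (max BU BV)" if "t \<in> {0..T}" for t x
  proof (cases "x \<in> {-R..R}")
    case True
    then have "(t, x) \<in> ?S" using that by simp
    then have "\<bar>U t x\<bar> \<le> BU" "\<bar>V t x\<bar> \<le> BV"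
      using BU BV by (metis (no_types, lifting) case_prod_conv image_eqI real_norm_def)+
    then show ?thesis by linarith
  next
    case False
    then have "\<not> (g t \<le> x \<and> x \<le> h t)" using R[OF that] by auto
    then show ?thesis by (simp add: zero_ext_outside)
  qed
  then show ?thesis using that[of "max 1 (max BU BV)"] by simp
qed

definition flux_density :: "real \<Rightarrow> real \<Rightarrow> real \<Rightarrow> real" where
  "flux_density t p x = U t x * W_J J1 p + \<rho> * V t x * W_clamped W p"

lemma flux_eq_integral:
  assumes "-R \<le> g t" "h t \<le> R"
  shows "flux_h t = integral {-R..R} (\<lambda>x. flux_density t (h t - x) x)"
    and "flux_g t = integral {-R..R} (\<lambda>x. flux_density t (x - g t) x)"
proof -
  have sub: "{g t..h t} \<subseteq> {-R..R}" using assms by auto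
  have "integral {-R..R} (\<lambda>x. flux_density t (h t - x) x) = integral {-R..R}
      (\<lambda>x. if x \<in> {g t..h t} then u t x * W_J J1 (h t - x) + \<rho> * v t x * W (h t - x) else 0)"
    by (rule integral_cong) (auto simp: flux_density_def zero_ext_def W_clamped_eq)
  then show "flux_h t = integral {-R..R} (\<lambda>x. flux_density t (h t - x) x)"
    unfolding flux_h_def integral_restrict_subinterval[OF sub] by simp
  have "integral {-R..R} (\<lambda>x. flux_density t (x - g t) x) = integral {-R..R}
      (\<lambda>x. if x \<in> {g t..h t} then u t x * W_J J1 (x - g t) + \<rho> * v t x * W (x - g t) else 0)"
    by (rule integral_cong) (auto simp: flux_density_def zero_ext_def W_clamped_eq)
  then show "flux_g t = integral {-R..R} (\<lambda>x. flux_density t (x - g t) x)"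
    unfolding flux_g_def integral_restrict_subinterval[OF sub] by simp
qed

lemma flux_density_continuous:
  assumes "0 \<le> t" "continuous_on S p"
  shows "continuous_on S (\<lambda>x. flux_density t (p x) x)"
  unfolding flux_density_def
  by (intro continuous_intros continuous_on_compose2[OF W_J_continuous[OF J1] assms(2)]
      continuous_on_compose2[OF W_clamped_continuous[OF W] assms(2)]
      continuous_on_subset[OF U_continuous_space[OF assms(1)]]
      continuous_on_subset[OF V_continuous_space[OF assms(1)]]) auto

end

section \<open>Comparison of two solutions\<close>

locale fbp_comparison =
  S1: nonlocal_fbp d1 d2 a b e \<rho> \<mu>1 h0 J1 J2 W G u0 v0 g1 h1 u1 v1 +
  S2: nonlocal_fbp d1 d2 a b e \<rho> \<mu>2 h0 J1 J2 W G u0 v0 g2 h2 u2 v2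
  for d1 d2 a b e \<rho> \<mu>1 \<mu>2 h0 :: real and J1 J2 W G u0 v0 g1 h1 g2 h2 :: "real \<Rightarrow> real"
    and u1 v1 u2 v2 :: "real \<Rightarrow> real \<Rightarrow> real" +
  assumes mu_le: "\<mu>1 \<le> \<mu>2"

locale fbp_comparison_on = fbp_comparison +
  fixes T R B BJ1 BJ2 BW LW LG \<delta> :: real
  assumes T: "0 < T" and R: "0 < R"
    and domains: "\<And>t. t \<in> {0..T} \<Longrightarrow> -R \<le> g1 t \<and> h1 t \<le> R \<and> -R \<le> g2 t \<and> h2 t \<le> R"
    and B: "0 \<le> B" "\<And>t x. t \<in> {0..T} \<Longrightarrow> S1.U t x \<le> B \<and> S1.V t x \<le> B \<and> S2.V t x \<le> B"
    and BJ: "\<And>z. J1 z \<le> BJ1" "\<And>z. J2 z \<le> BJ2"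
    and BW: "0 \<le> BW" "\<And>y. W_clamped W y \<le> BW"
    and LW: "0 \<le> LW" "\<And>p q. p \<in> {0..2 * R} \<Longrightarrow> q \<in> {0..2 * R} \<Longrightarrow> \<bar>W p - W q\<bar> \<le> LW * \<bar>p - q\<bar>"
    and LG: "0 \<le> LG" "\<And>p q. 0 \<le> q \<Longrightarrow> q \<le> p \<Longrightarrow> p \<le> B \<Longrightarrow> G p - G q \<le> LG * (p - q)"
    and speed: "0 < \<delta>"
      "\<And>s t. 0 \<le> s \<Longrightarrow> s \<le> t \<Longrightarrow> t \<le> T \<Longrightarrow> \<delta> * (t - s) \<le> h1 t - h1 s \<and> \<delta> * (t - s) \<le> g1 s - g1 t"
begin

text \<open>\<open>C\<close> bounds the time derivatives of \<open>u1\<close> and \<open>v1\<close>. A point that has entered the domain of the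
  first solution at most a time \<open>E / \<delta>\<close> ago therefore carries values below \<open>C E / \<delta> < M E\<close>.
  \<open>K\<close> dominates the Lipschitz constants of the right-hand sides and of the front velocities
  with respect to perturbations of size \<open>M E\<close>.\<close>

definition "C = d1 * BJ1 * (2 * R) * B + e * B + d2 * BJ2 * (2 * R) * B + LG * B"
definition "M = C / \<delta> + 1"
definition "Cflux = M * W_J J1 0 + \<rho> * (M * BW + B * LW)"
definition "K = \<mu>1 * (2 * R) * Cflux + d1 * BJ1 * (2 * R) + e + d2 * BJ2 * (2 * R) + LG + 1"

definition ordered :: "real \<Rightarrow> real \<Rightarrow> bool" where
  "ordered \<epsilon> t \<longleftrightarrow> h1 t < h2 t + \<epsilon> * exp (K * t) \<and> g2 t - \<epsilon> * exp (K * t) < g1 t \<and>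
     (\<forall>x\<in>{-R..R}. S1.U t x < S2.U t x + M * (\<epsilon> * exp (K * t)) \<and>
                    S1.V t x < S2.V t x + M * (\<epsilon> * exp (K * t)))"

lemma BJ_nonneg: "0 \<le> BJ1" "0 \<le> BJ2"
  using BJ[of 0] cond_J_nonneg[OF S1.J1, of 0] cond_J_nonneg[OF S1.J2, of 0] by auto

lemma C_nonneg: "0 \<le> C"
  unfolding C_def using BJ_nonneg S1.d1 S1.d2 S1.e B LG R by (intro add_nonneg_nonneg mult_nonneg_nonneg) auto

lemma M_pos: "0 < M"
  using C_nonneg speed(1) by (simp add: M_def add_nonneg_pos)

lemma ordered_components:
  assumes "ordered \<epsilon> t" "0 < \<epsilon>" "t \<in> {0..T}"
  shows "S1.U t x < S2.U t x + M * (\<epsilon> * exp (K * t)) \<and> S1.V t x < S2.V t x + M * (\<epsilon> * exp (K * t))"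
proof (cases "x \<in> {-R..R}")
  case False
  then have "\<not> (g1 t \<le> x \<and> x \<le> h1 t)" using domains[OF assms(3)] by auto
  moreover have "0 < M * (\<epsilon> * exp (K * t))" using M_pos assms(2) by simp
  ultimately show ?thesis
    using S2.U_nonneg[of t x] S2.V_nonneg[of t x] assms(3) by (simp add: zero_ext_outside)
qed (use assms(1) in \<open>simp add: ordered_def\<close>)

lemma K_bounds: "\<mu>1 * (2 * R) * Cflux < K" "d1 * BJ1 * (2 * R) + e < K" "d2 * BJ2 * (2 * R) + LG < K"
proof -
  have "0 \<le> Cflux"
    unfolding Cflux_def using M_pos W_J_nonneg[OF S1.J1, of 0] S1.rho BW LW B
    by (intro add_nonneg_nonneg mult_nonneg_nonneg) auto
  then have "0 \<le> \<mu>1 * (2 * R) * Cflux" using S1.mu R by simp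
  moreover have "0 \<le> d1 * BJ1 * (2 * R)" "0 \<le> d2 * BJ2 * (2 * R)" using S1.d1 S1.d2 BJ_nonneg R by simp_all
  ultimately show "\<mu>1 * (2 * R) * Cflux < K" "d1 * BJ1 * (2 * R) + e < K" "d2 * BJ2 * (2 * R) + LG < K"
    unfolding K_def using S1.e LG(1) by linarith+
qed

lemma ordered_0: "0 < \<epsilon> \<Longrightarrow> ordered \<epsilon> 0"
  using M_pos S1.g_0 S1.h_0 S2.g_0 S2.h_0 S1.uv_initial S2.uv_initial
  by (auto simp: ordered_def zero_ext_def)

lemma closed_disordered: "closed {t \<in> {0..T}. \<not> ordered \<epsilon> t}"
proof -
  let ?E = "\<lambda>t. \<epsilon> * exp (K * t)"
  define \<Phi> where "\<Phi> t x = max (max (h1 t - h2 t - ?E t) (g2 t - ?E t - g1 t))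
    (max (S1.U t x - S2.U t x - M * ?E t) (S1.V t x - S2.V t x - M * ?E t))" for t x
  have "continuous_on ({0..T} \<times> {-R..R}) (\<lambda>(t, x). \<Phi> t x)"
    unfolding \<Phi>_def case_prod_beta'
    by (intro continuous_intros continuous_on_compose2[OF S1.h_continuous] continuous_on_compose2[OF S2.h_continuous]
        continuous_on_compose2[OF S1.g_continuous] continuous_on_compose2[OF S2.g_continuous]
        continuous_on_subset[OF S1.U_continuous[unfolded case_prod_beta']]
        continuous_on_subset[OF S2.U_continuous[unfolded case_prod_beta']]
        continuous_on_subset[OF S1.V_continuous[unfolded case_prod_beta']]
        continuous_on_subset[OF S2.V_continuous[unfolded case_prod_beta']]) auto
  then have "closed {t \<in> {0..T}. \<exists>x\<in>{-R..R}. 0 \<le> \<Phi> t x}" by (rule closed_times_with_nonneg_point)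
  moreover have "\<not> ordered \<epsilon> t \<longleftrightarrow> (\<exists>x\<in>{-R..R}. 0 \<le> \<Phi> t x)" for t
  proof
    assume "\<not> ordered \<epsilon> t"
    have "0 \<in> {-R..R}" using R by simp
    from \<open>\<not> ordered \<epsilon> t\<close> have "\<not> h1 t < h2 t + ?E t \<or> \<not> g2 t - ?E t < g1 t \<or>
        (\<exists>x\<in>{-R..R}. \<not> (S1.U t x < S2.U t x + M * ?E t \<and> S1.V t x < S2.V t x + M * ?E t))"
      unfolding ordered_def by blast
    then show "\<exists>x\<in>{-R..R}. 0 \<le> \<Phi> t x"
    proof (elim disjE bexE)
      fix x assume "x \<in> {-R..R}" "\<not> (S1.U t x < S2.U t x + M * ?E t \<and> S1.V t x < S2.V t x + M * ?E t)"
      then show ?thesis by (intro bexI[of _ x]) (auto simp: \<Phi>_def le_max_iff_disj)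
    qed (use \<open>0 \<in> {-R..R}\<close> in \<open>(intro bexI[of _ 0]; auto simp: \<Phi>_def le_max_iff_disj)+\<close>)
  next
    assume "\<exists>x\<in>{-R..R}. 0 \<le> \<Phi> t x"
    then obtain x where x: "x \<in> {-R..R}" "0 \<le> \<Phi> t x" by blast
    then have "\<not> h1 t < h2 t + ?E t \<or> \<not> g2 t - ?E t < g1 t \<or>
        \<not> (S1.U t x < S2.U t x + M * ?E t \<and> S1.V t x < S2.V t x + M * ?E t)"
      by (auto simp: \<Phi>_def le_max_iff_disj)
    then show "\<not> ordered \<epsilon> t" using x(1) unfolding ordered_def by blast
  qed
  ultimately show ?thesis by simp
qed

lemma ordered_nonstrict_at_first_contact:
  assumes "0 < t" and before: "\<And>s. 0 \<le> s \<Longrightarrow> s < t \<Longrightarrow> ordered \<epsilon> s"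
  shows "h1 t \<le> h2 t + \<epsilon> * exp (K * t)" "g2 t - \<epsilon> * exp (K * t) \<le> g1 t"
    and "\<And>x. x \<in> {-R..R} \<Longrightarrow> S1.U t x \<le> S2.U t x + M * (\<epsilon> * exp (K * t))"
    and "\<And>x. x \<in> {-R..R} \<Longrightarrow> S1.V t x \<le> S2.V t x + M * (\<epsilon> * exp (K * t))"
proof -
  have limit: "F t \<le> F' t" if "continuous_on {0..} F" "continuous_on {0..} F'"
    "\<And>s. 0 \<le> s \<Longrightarrow> s < t \<Longrightarrow> F s < F' s" for F F' :: "real \<Rightarrow> real"
  proof -
    have "0 \<le> F' t - F t"
      by (rule nonneg_at_if_nonneg_before[OF _ \<open>0 < t\<close>])
         (use that in \<open>auto intro!: continuous_intros intro: continuous_on_subset less_imp_le\<close>)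
    then show ?thesis by simp
  qed
  show "h1 t \<le> h2 t + \<epsilon> * exp (K * t)"
    by (rule limit) (use before in \<open>auto intro!: continuous_intros S1.h_continuous S2.h_continuous simp: ordered_def\<close>)
  show "g2 t - \<epsilon> * exp (K * t) \<le> g1 t"
    by (rule limit) (use before in \<open>auto intro!: continuous_intros S1.g_continuous S2.g_continuous simp: ordered_def\<close>)
  fix x assume x: "x \<in> {-R..R}"
  show "S1.U t x \<le> S2.U t x + M * (\<epsilon> * exp (K * t))"
    by (rule limit) (use before x in \<open>auto intro!: continuous_intros S1.U_continuous_time
        S2.U_continuous_time simp: ordered_def\<close>)
  show "S1.V t x \<le> S2.V t x + M * (\<epsilon> * exp (K * t))"
    by (rule limit) (use before x in \<open>auto intro!: continuous_intros S1.V_continuous_time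
        S2.V_continuous_time simp: ordered_def\<close>)
qed

lemma conv_bounded:
  assumes "cond_J J" "\<And>z. J z \<le> BJ" "continuous_on {-R..R} w" "\<And>y. 0 \<le> w y \<and> w y \<le> B"
  shows "0 \<le> conv R J w x" "conv R J w x \<le> BJ * B * (2 * R)"
proof -
  show "0 \<le> conv R J w x"
    unfolding conv_def using assms(4) cond_J_nonneg[OF assms(1)] by (auto intro!: integral_nonneg_unconditional)
  show "conv R J w x \<le> BJ * B * (2 * R)"
    using conv_le_plus[OF cond_J_continuous[OF assms(1)] cond_J_nonneg[OF assms(1)] assms(2) assms(3)
        continuous_on_const, of 0 B x] assms(4) R B(1)
    by (simp add: conv_def)
qed

lemma first_rhs_le_C:
  assumes "0 < t" "t \<le> T" "g1 t < x" "x < h1 t"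
  shows "S1.rhs_u t x \<le> C" "S1.rhs_v t x \<le> C"
proof -
  have t: "t \<in> {0..T}" "0 \<le> t" using assms by auto
  have bounds: "0 \<le> S1.U t y \<and> S1.U t y \<le> B" "0 \<le> S1.V t y \<and> S1.V t y \<le> B" for y
    using S1.U_nonneg S1.V_nonneg B(2)[OF t(1)] t by auto
  have conv: "conv R J1 (S1.U t) x \<le> BJ1 * B * (2 * R)" "conv R J2 (S1.V t) x \<le> BJ2 * B * (2 * R)"
    using conv_bounded(2)[OF S1.J1 BJ(1) _ bounds(1)] conv_bounded(2)[OF S1.J2 BJ(2) _ bounds(2)]
      continuous_on_subset[OF S1.U_continuous_space[OF t(2)]] continuous_on_subset[OF S1.V_continuous_space[OF t(2)]]
    by auto
  have eqs: "S1.rhs_u t x = d1 * conv R J1 (S1.U t) x - (d1 + a) * S1.U t x + e * S1.V t x"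
    "S1.rhs_v t x = d2 * conv R J2 (S1.V t) x - (d2 + b) * S1.V t x + G (S1.U t x)"
    using S1.rhs_conv[of R t x] domains[OF t(1)] assms(3,4) by auto
  have "G (S1.U t x) \<le> LG * S1.U t x"
    using LG(2)[of 0 "S1.U t x"] bounds(1)[of x] cond_G1_zero[OF S1.G] by simp
  also have "\<dots> \<le> LG * B" using bounds(1)[of x] LG(1) by (simp add: mult_left_mono)
  finally have G: "G (S1.U t x) \<le> LG * B" .
  have "d1 * conv R J1 (S1.U t) x \<le> d1 * BJ1 * (2 * R) * B"
    "d2 * conv R J2 (S1.V t) x \<le> d2 * BJ2 * (2 * R) * B"
    using mult_left_mono[OF conv(1), of d1] mult_left_mono[OF conv(2), of d2] S1.d1 S1.d2
    by (simp_all add: algebra_simps)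
  moreover have "0 \<le> (d1 + a) * S1.U t x" "0 \<le> (d2 + b) * S1.V t x" "e * S1.V t x \<le> e * B"
    using bounds[of x] S1.d1 S1.a S1.d2 S1.b S1.e by simp_all
  moreover have "0 \<le> d1 * BJ1 * (2 * R) * B" "0 \<le> d2 * BJ2 * (2 * R) * B" "0 \<le> e * B" "0 \<le> LG * B"
    using S1.d1 S1.d2 S1.e BJ_nonneg R B(1) LG(1) by simp_all
  ultimately show "S1.rhs_u t x \<le> C" "S1.rhs_v t x \<le> C" unfolding eqs C_def using G by linarith+
qed

text \<open>The entry happened recently because the first fronts move with speed at least \<open>\<delta>\<close> and are
  at most \<open>E\<close> ahead of the second ones.\<close>

lemma recently_entered:
  assumes t: "0 \<le> t" "t \<le> T" and fronts: "h1 t < h2 t + E" "g2 t - E < g1 t"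
    and x: "g1 t < x" "x < h1 t" "\<not> (g2 t < x \<and> x < h2 t)"
  obtains s where "0 \<le> s" "s < t" "x = g1 s \<or> x = h1 s" "\<delta> * (t - s) < E"
    "\<And>\<tau>. s < \<tau> \<Longrightarrow> \<tau> \<le> t \<Longrightarrow> g1 \<tau> < x \<and> x < h1 \<tau>"
proof (cases "h2 t \<le> x")
  case True
  then have "h0 \<le> x" using S2.h_ge_h0[OF t(1)] by linarith
  then obtain s where s: "0 \<le> s" "s < t" "h1 s = x" "\<And>\<tau>. s < \<tau> \<Longrightarrow> x < h1 \<tau>"
    using S1.h_entry_time[OF t(1) _ x(2)] by blast
  have "g1 \<tau> < x" if "s < \<tau>" for \<tau>
    using S1.g_le_neg_h0[of \<tau>] S2.h_ge_h0[OF t(1)] S1.h0 True s(1) that by linarith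
  moreover have "\<delta> * (t - s) < E" using speed(2)[of s t] s t fronts(1) True by auto
  ultimately show ?thesis using that[of s] s by auto
next
  case False
  then have "x \<le> g2 t" using x(3) by auto
  then have "x \<le> - h0" using S2.g_le_neg_h0[OF t(1)] by linarith
  then obtain s where s: "0 \<le> s" "s < t" "g1 s = x" "\<And>\<tau>. s < \<tau> \<Longrightarrow> g1 \<tau> < x"
    using S1.g_entry_time[OF t(1) _ x(1)] by blast
  have "x < h1 \<tau>" if "s < \<tau>" for \<tau>
    using S1.h_ge_h0[of \<tau>] S2.g_le_neg_h0[OF t(1)] S1.h0 \<open>x \<le> g2 t\<close> s(1) that by linarith
  moreover have "\<delta> * (t - s) < E" using speed(2)[of s t] s t fronts(2) \<open>x \<le> g2 t\<close> by auto
  ultimately show ?thesis using that[of s] s by auto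
qed

lemma small_after_recent_entry:
  fixes Z :: "real \<Rightarrow> real"
  assumes "s < t" "Z s = 0" "\<delta> * (t - s) < E" "continuous_on {s..t} Z"
    and "\<And>\<tau>. s < \<tau> \<Longrightarrow> \<tau> < t \<Longrightarrow> \<exists>D. (Z has_real_derivative D) (at \<tau>) \<and> D \<le> C"
  shows "Z t < M * E"
proof -
  have "0 < \<delta> * (t - s)" using assms(1) speed(1) by simp
  then have "0 < E" using assms(3) by linarith
  have "t - s \<le> E / \<delta>" using assms(3) speed(1) by (simp add: field_simps)
  have "Z t - Z s \<le> C * (t - s)"
    by (rule increment_le_if_deriv_le) (use assms(1,4,5) in auto)
  also have "\<dots> \<le> C * (E / \<delta>)" using \<open>t - s \<le> E / \<delta>\<close> C_nonneg by (rule mult_left_mono)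
  also have "\<dots> < C * (E / \<delta>) + E" using \<open>0 < E\<close> by simp
  also have "\<dots> = M * E" using speed(1) by (simp add: M_def field_simps)
  finally show ?thesis using assms(2) by simp
qed

lemma flux_density_le:
  assumes t: "t \<in> {0..T}" and E: "0 \<le> E" "p1 - p2 = E"
    and UV: "S1.U t x \<le> S2.U t x + M * E" "S1.V t x \<le> S2.V t x + M * E"
    and p1: "g1 t \<le> x \<Longrightarrow> x \<le> h1 t \<Longrightarrow> 0 \<le> p1 \<and> p1 \<le> 2 * R"
    and p2: "g2 t \<le> x \<Longrightarrow> x \<le> h2 t \<Longrightarrow> 0 \<le> p2 \<and> p2 \<le> 2 * R"
  shows "S1.flux_density t p1 x \<le> S2.flux_density t p2 x + Cflux * E"
proof -
  have nonneg: "0 \<le> S2.U t x" "0 \<le> S2.V t x" "0 \<le> M * E" "\<And>p. 0 \<le> W_J J1 p" "\<And>p. 0 \<le> W_clamped W p"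
    using S2.U_nonneg S2.V_nonneg t E M_pos W_J_nonneg[OF S1.J1] W_clamped_nonneg[OF S1.W] by auto
  have "0 \<le> Cflux * E"
    unfolding Cflux_def using nonneg M_pos E S1.rho BW(1) LW(1) B(1) by (intro mult_nonneg_nonneg) auto
  show ?thesis
  proof (cases "g1 t \<le> x \<and> x \<le> h1 t")
    case False
    then show ?thesis
      using nonneg \<open>0 \<le> Cflux * E\<close> S1.rho
      by (simp add: S1.flux_density_def S2.flux_density_def zero_ext_outside)
  next
    case True
    then have "0 \<le> p1" "p1 \<le> 2 * R" using p1 by auto
    have U_part: "S1.U t x * W_J J1 p1 \<le> S2.U t x * W_J J1 p2 + M * E * W_J J1 0"
      using W_J_weighted_le[OF S1.J1 UV(1)] nonneg \<open>0 \<le> p1\<close> E by simp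
    have "S2.V t x * W_clamped W p1 \<le> S2.V t x * W_clamped W p2 + B * LW * E"
    proof (cases "g2 t \<le> x \<and> x \<le> h2 t")
      case True
      then have "W p1 - W p2 \<le> LW * E"
        using LW(2)[of p1 p2] p2 \<open>0 \<le> p1\<close> \<open>p1 \<le> 2 * R\<close> E by auto
      then have "W_clamped W p1 - W_clamped W p2 \<le> LW * E" using p2 True \<open>0 \<le> p1\<close> by (simp add: W_clamped_eq)
      then have "S2.V t x * (W_clamped W p1 - W_clamped W p2) \<le> S2.V t x * (LW * E)"
        using nonneg(2) by (rule mult_left_mono)
      also have "\<dots> \<le> B * (LW * E)" using B(2)[OF t] LW(1) E by (intro mult_right_mono) auto
      finally have "S2.V t x * (W_clamped W p1 - W_clamped W p2) \<le> B * (LW * E)" .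
      then show ?thesis by (simp add: algebra_simps)
    qed (use B(1) LW(1) E in \<open>simp add: zero_ext_outside\<close>)
    then have V_part: "S1.V t x * W_clamped W p1 \<le> S2.V t x * W_clamped W p2 + (M * E * BW + B * LW * E)"
      using mult_right_mono[OF UV(2) nonneg(5)[of p1]] mult_left_mono[OF BW(2)[of p1] nonneg(3)]
      by (simp add: algebra_simps)
    show ?thesis
      using U_part mult_left_mono[OF V_part less_imp_le[OF S1.rho]]
      by (simp add: S1.flux_density_def S2.flux_density_def Cflux_def algebra_simps)
  qed
qed

lemma flux_integral_le:
  assumes t: "t \<in> {0..T}" and E: "0 \<le> E"
    and UV: "\<And>x. x \<in> {-R..R} \<Longrightarrow> S1.U t x \<le> S2.U t x + M * E \<and> S1.V t x \<le> S2.V t x + M * E"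
    and p: "continuous_on UNIV p1" "continuous_on UNIV p2" "\<And>x. p1 x - p2 x = E"
    and p1: "\<And>x. g1 t \<le> x \<Longrightarrow> x \<le> h1 t \<Longrightarrow> 0 \<le> p1 x \<and> p1 x \<le> 2 * R"
    and p2: "\<And>x. g2 t \<le> x \<Longrightarrow> x \<le> h2 t \<Longrightarrow> 0 \<le> p2 x \<and> p2 x \<le> 2 * R"
  shows "integral {-R..R} (\<lambda>x. S1.flux_density t (p1 x) x)
    \<le> integral {-R..R} (\<lambda>x. S2.flux_density t (p2 x) x) + Cflux * E * (2 * R)"
proof -
  have "integral {-R..R} (\<lambda>x. S1.flux_density t (p1 x) x)
      \<le> integral {-R..R} (\<lambda>x. S2.flux_density t (p2 x) x) + Cflux * E * (R - - R)"
    using t R flux_density_le[OF t E(1) p(3) conjunct1[OF UV] conjunct2[OF UV] p1 p2]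
    by (intro integral_le_plus_const S1.flux_density_continuous S2.flux_density_continuous
        continuous_on_subset[OF p(1)] continuous_on_subset[OF p(2)]) auto
  then show ?thesis by simp
qed

lemma h_stays_ordered:
  assumes "0 < \<epsilon>" "0 < t" "t \<le> T" and before: "\<And>s. 0 \<le> s \<Longrightarrow> s < t \<Longrightarrow> ordered \<epsilon> s"
  shows "h1 t < h2 t + \<epsilon> * exp (K * t)"
proof -
  let ?E = "\<epsilon> * exp (K * t)"
  have t: "t \<in> {0..T}" "0 \<le> t" using assms by auto
  note nonstrict = ordered_nonstrict_at_first_contact[OF \<open>0 < t\<close> before]
  have "h1 t - h2 t < ?E"
  proof (rule below_exp_barrier_at_first_contact[where F = "\<lambda>s. h1 s - h2 s"])
    show "((\<lambda>s. h1 s - h2 s) has_real_derivative \<mu>1 * S1.flux_h t - \<mu>2 * S2.flux_h t) (at t)"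
      by (intro derivative_intros S1.h_deriv S2.h_deriv \<open>0 < t\<close>)
    show "h1 s - h2 s < \<epsilon> * exp (K * s)" if "0 \<le> s" "s < t" for s
      using before[OF that] by (simp add: ordered_def)
    assume "?E \<le> h1 t - h2 t"
    then have contact: "h1 t - h2 t = ?E" using nonstrict(1) by simp
    have "S1.flux_h t = integral {-R..R} (\<lambda>x. S1.flux_density t (h1 t - x) x)"
      using S1.flux_eq_integral(1) domains[OF t(1)] by blast
    also have "\<dots> \<le> integral {-R..R} (\<lambda>x. S2.flux_density t (h2 t - x) x) + Cflux * ?E * (2 * R)"
      by (rule flux_integral_le[OF t(1)])
         (use \<open>0 < \<epsilon>\<close> nonstrict(3,4) contact domains[OF t(1)] in \<open>auto intro!: continuous_intros\<close>)
    also have "integral {-R..R} (\<lambda>x. S2.flux_density t (h2 t - x) x) = S2.flux_h t"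
      using S2.flux_eq_integral(1) domains[OF t(1)] by auto
    finally have "S1.flux_h t \<le> S2.flux_h t + (2 * R) * Cflux * ?E" by (simp add: algebra_simps)
    moreover have "0 \<le> S2.flux_h t" using S2.flux_h_nonneg S2.nonneg_everywhere t(2) by blast
    ultimately have "\<mu>1 * S1.flux_h t - \<mu>2 * S2.flux_h t \<le> \<mu>1 * ((2 * R) * Cflux * ?E)"
      using S1.mu mu_le by (intro weighted_difference_le) auto
    also have "\<dots> < K * ?E" using K_bounds(1) \<open>0 < \<epsilon>\<close> by (simp add: mult.assoc[symmetric])
    finally show "\<mu>1 * S1.flux_h t - \<mu>2 * S2.flux_h t < K * ?E" .
  qed (rule \<open>0 < t\<close>)
  then show ?thesis by simp
qed

lemma g_stays_ordered:
  assumes "0 < \<epsilon>" "0 < t" "t \<le> T" and before: "\<And>s. 0 \<le> s \<Longrightarrow> s < t \<Longrightarrow> ordered \<epsilon> s"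
  shows "g2 t - \<epsilon> * exp (K * t) < g1 t"
proof -
  let ?E = "\<epsilon> * exp (K * t)"
  have t: "t \<in> {0..T}" "0 \<le> t" using assms by auto
  note nonstrict = ordered_nonstrict_at_first_contact[OF \<open>0 < t\<close> before]
  have "g2 t - g1 t < ?E"
  proof (rule below_exp_barrier_at_first_contact[where F = "\<lambda>s. g2 s - g1 s"])
    show "((\<lambda>s. g2 s - g1 s) has_real_derivative \<mu>1 * S1.flux_g t - \<mu>2 * S2.flux_g t) (at t)"
      using DERIV_diff[OF S2.g_deriv S1.g_deriv, OF \<open>0 < t\<close> \<open>0 < t\<close>] by simp
    show "g2 s - g1 s < \<epsilon> * exp (K * s)" if "0 \<le> s" "s < t" for s
      using before[OF that] by (simp add: ordered_def)
    assume "?E \<le> g2 t - g1 t"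
    then have contact: "g2 t - g1 t = ?E" using nonstrict(2) by simp
    have "S1.flux_g t = integral {-R..R} (\<lambda>x. S1.flux_density t (x - g1 t) x)"
      using S1.flux_eq_integral(2) domains[OF t(1)] by blast
    also have "\<dots> \<le> integral {-R..R} (\<lambda>x. S2.flux_density t (x - g2 t) x) + Cflux * ?E * (2 * R)"
      by (rule flux_integral_le[OF t(1)])
         (use \<open>0 < \<epsilon>\<close> nonstrict(3,4) contact domains[OF t(1)] in \<open>auto intro!: continuous_intros\<close>)
    also have "integral {-R..R} (\<lambda>x. S2.flux_density t (x - g2 t) x) = S2.flux_g t"
      using S2.flux_eq_integral(2) domains[OF t(1)] by auto
    finally have "S1.flux_g t \<le> S2.flux_g t + (2 * R) * Cflux * ?E" by (simp add: algebra_simps)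
    moreover have "0 \<le> S2.flux_g t" using S2.flux_g_nonneg S2.nonneg_everywhere t(2) by blast
    ultimately have "\<mu>1 * S1.flux_g t - \<mu>2 * S2.flux_g t \<le> \<mu>1 * ((2 * R) * Cflux * ?E)"
      using S1.mu mu_le by (intro weighted_difference_le) auto
    also have "\<dots> < K * ?E" using K_bounds(1) \<open>0 < \<epsilon>\<close> by (simp add: mult.assoc[symmetric])
    finally show "\<mu>1 * S1.flux_g t - \<mu>2 * S2.flux_g t < K * ?E" .
  qed (rule \<open>0 < t\<close>)
  then show ?thesis by simp
qed

lemma conv_differences_le:
  assumes "t \<in> {0..T}" "0 \<le> c"
    and UV: "\<And>y. y \<in> {-R..R} \<Longrightarrow> S1.U t y \<le> S2.U t y + c \<and> S1.V t y \<le> S2.V t y + c"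
  shows "d1 * conv R J1 (S1.U t) x \<le> d1 * conv R J1 (S2.U t) x + d1 * BJ1 * (2 * R) * c"
    and "d2 * conv R J2 (S1.V t) x \<le> d2 * conv R J2 (S2.V t) x + d2 * BJ2 * (2 * R) * c"
proof -
  have "0 \<le> t" using assms(1) by simp
  have "conv R J1 (S1.U t) x \<le> conv R J1 (S2.U t) x + BJ1 * c * (2 * R)"
    "conv R J2 (S1.V t) x \<le> conv R J2 (S2.V t) x + BJ2 * c * (2 * R)"
    using UV \<open>0 \<le> c\<close> R
    by (auto intro!: conv_le_plus[OF cond_J_continuous[OF S1.J1] cond_J_nonneg[OF S1.J1] BJ(1)]
        conv_le_plus[OF cond_J_continuous[OF S1.J2] cond_J_nonneg[OF S1.J2] BJ(2)]
        continuous_on_subset[OF S1.U_continuous_space[OF \<open>0 \<le> t\<close>]]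
        continuous_on_subset[OF S2.U_continuous_space[OF \<open>0 \<le> t\<close>]]
        continuous_on_subset[OF S1.V_continuous_space[OF \<open>0 \<le> t\<close>]]
        continuous_on_subset[OF S2.V_continuous_space[OF \<open>0 \<le> t\<close>]])
  from mult_left_mono[OF this(1), of d1] mult_left_mono[OF this(2), of d2] S1.d1 S1.d2
  show "d1 * conv R J1 (S1.U t) x \<le> d1 * conv R J1 (S2.U t) x + d1 * BJ1 * (2 * R) * c"
    "d2 * conv R J2 (S1.V t) x \<le> d2 * conv R J2 (S2.V t) x + d2 * BJ2 * (2 * R) * c"
    by (simp_all add: algebra_simps)
qed

lemma rhs_u_difference_le:
  assumes t: "t \<in> {0..T}" and x: "g1 t < x" "x < h1 t" "g2 t < x" "x < h2 t" and "0 \<le> c"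
    and UV: "\<And>y. y \<in> {-R..R} \<Longrightarrow> S1.U t y \<le> S2.U t y + c \<and> S1.V t y \<le> S2.V t y + c"
    and "S2.U t x \<le> S1.U t x"
  shows "S1.rhs_u t x - S2.rhs_u t x \<le> (d1 * BJ1 * (2 * R) + e) * c"
proof -
  have "x \<in> {-R..R}" using x domains[OF t] by auto
  have "(d1 + a) * S2.U t x \<le> (d1 + a) * S1.U t x" using assms(8) S1.d1 S1.a by (intro mult_left_mono) auto
  moreover have "e * S1.V t x \<le> e * S2.V t x + e * c"
    using UV[OF \<open>x \<in> {-R..R}\<close>] S1.e by (simp add: distrib_left[symmetric] mult_left_mono)
  ultimately show ?thesis
    using S1.rhs_conv(1)[of R t x] S2.rhs_conv(1)[of R t x] domains[OF t] x
      conv_differences_le(1)[OF t \<open>0 \<le> c\<close> UV, where x = x]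
    by (simp add: algebra_simps)
qed

lemma rhs_v_difference_le:
  assumes t: "t \<in> {0..T}" and x: "g1 t < x" "x < h1 t" "g2 t < x" "x < h2 t" and "0 \<le> c"
    and UV: "\<And>y. y \<in> {-R..R} \<Longrightarrow> S1.U t y \<le> S2.U t y + c \<and> S1.V t y \<le> S2.V t y + c"
    and "S2.V t x \<le> S1.V t x"
  shows "S1.rhs_v t x - S2.rhs_v t x \<le> (d2 * BJ2 * (2 * R) + LG) * c"
proof -
  have "0 \<le> t" "x \<in> {-R..R}" using t x domains[OF t] by auto
  have "(d2 + b) * S2.V t x \<le> (d2 + b) * S1.V t x" using assms(8) S1.d2 S1.b by (intro mult_left_mono) auto
  moreover have "G (S1.U t x) - G (S2.U t x) \<le> LG * c"
  proof (cases "S2.U t x \<le> S1.U t x")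
    case True
    then have "G (S1.U t x) - G (S2.U t x) \<le> LG * (S1.U t x - S2.U t x)"
      using LG(2) S2.U_nonneg[OF \<open>0 \<le> t\<close>] B(2)[OF t] by blast
    also have "\<dots> \<le> LG * c" using UV[OF \<open>x \<in> {-R..R}\<close>] LG(1) by (intro mult_left_mono) auto
    finally show ?thesis .
  next
    case False
    then have "G (S1.U t x) < G (S2.U t x)"
      using cond_G1_strict_mono[OF S1.G S1.U_nonneg[OF \<open>0 \<le> t\<close>]] by simp
    then show ?thesis using LG(1) \<open>0 \<le> c\<close> by (smt (verit) mult_nonneg_nonneg)
  qed
  ultimately show ?thesis
    using S1.rhs_conv(2)[of R t x] S2.rhs_conv(2)[of R t x] domains[OF t] x
      conv_differences_le(2)[OF t \<open>0 \<le> c\<close> UV, where x = x]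
    by (simp add: algebra_simps)
qed

lemma recently_entered_values_small:
  fixes Z :: "real \<Rightarrow> real \<Rightarrow> real"
  assumes "0 < \<epsilon>" "0 < t" "t \<le> T" and before: "\<And>s. 0 \<le> s \<Longrightarrow> s < t \<Longrightarrow> ordered \<epsilon> s"
    and x: "g1 t < x" "x < h1 t" "\<not> (g2 t < x \<and> x < h2 t)"
    and Z: "continuous_on {0..} (\<lambda>s. Z s x)" "\<And>s. 0 \<le> s \<Longrightarrow> x = g1 s \<or> x = h1 s \<Longrightarrow> Z s x = 0"
      "\<And>\<tau>. 0 < \<tau> \<Longrightarrow> \<tau> \<le> T \<Longrightarrow> g1 \<tau> < x \<Longrightarrow> x < h1 \<tau> \<Longrightarrow>
        \<exists>D. ((\<lambda>s. Z s x) has_real_derivative D) (at \<tau>) \<and> D \<le> C"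
  shows "Z t x < M * (\<epsilon> * exp (K * t))"
proof -
  obtain s where s: "0 \<le> s" "s < t" "x = g1 s \<or> x = h1 s" "\<delta> * (t - s) < \<epsilon> * exp (K * t)"
    "\<And>\<tau>. s < \<tau> \<Longrightarrow> \<tau> \<le> t \<Longrightarrow> g1 \<tau> < x \<and> x < h1 \<tau>"
    using recently_entered[OF _ \<open>t \<le> T\<close> h_stays_ordered[OF assms(1-4)] g_stays_ordered[OF assms(1-4)] x]
      \<open>0 < t\<close> by auto
  show ?thesis
  proof (rule small_after_recent_entry[where Z = "\<lambda>s. Z s x", OF s(2) Z(2)[OF s(1,3)] s(4)])
    show "continuous_on {s..t} (\<lambda>s. Z s x)" by (rule continuous_on_subset[OF Z(1)]) (use s(1) in auto)
    fix \<tau> assume "s < \<tau>" "\<tau> < t"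
    then show "\<exists>D. ((\<lambda>s. Z s x) has_real_derivative D) (at \<tau>) \<and> D \<le> C"
      using Z(3) s(1,5) \<open>t \<le> T\<close> by auto
  qed
qed

lemma component_stays_ordered:
  fixes Z Z' rhs rhs' :: "real \<Rightarrow> real \<Rightarrow> real"
  assumes "0 < \<epsilon>" "0 < t" "t \<le> T" and before: "\<And>s. 0 \<le> s \<Longrightarrow> s < t \<Longrightarrow> ordered \<epsilon> s"
    and below: "\<And>s. 0 \<le> s \<Longrightarrow> s < t \<Longrightarrow> Z s x < Z' s x + M * (\<epsilon> * exp (K * s))"
    and first: "continuous_on {0..} (\<lambda>s. Z s x)" "\<And>s. 0 \<le> s \<Longrightarrow> \<not> (g1 s < x \<and> x < h1 s) \<Longrightarrow> Z s x = 0"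
      "\<And>\<tau>. 0 < \<tau> \<Longrightarrow> g1 \<tau> < x \<Longrightarrow> x < h1 \<tau> \<Longrightarrow> ((\<lambda>s. Z s x) has_real_derivative rhs \<tau> x) (at \<tau>)"
      "\<And>\<tau>. 0 < \<tau> \<Longrightarrow> \<tau> \<le> T \<Longrightarrow> g1 \<tau> < x \<Longrightarrow> x < h1 \<tau> \<Longrightarrow> rhs \<tau> x \<le> C"
    and second: "0 \<le> Z' t x" "\<not> (g2 t < x \<and> x < h2 t) \<Longrightarrow> Z' t x = 0"
      "g2 t < x \<Longrightarrow> x < h2 t \<Longrightarrow> ((\<lambda>s. Z' s x) has_real_derivative rhs' t x) (at t)"
    and rhs: "g1 t < x \<Longrightarrow> x < h1 t \<Longrightarrow> g2 t < x \<Longrightarrow> x < h2 t \<Longrightarrow> Z' t x \<le> Z t x \<Longrightarrow>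
      rhs t x - rhs' t x < K * (M * (\<epsilon> * exp (K * t)))"
  shows "Z t x < Z' t x + M * (\<epsilon> * exp (K * t))"
proof -
  have "0 < M * (\<epsilon> * exp (K * t))" using assms(1) M_pos by simp
  consider "\<not> (g1 t < x \<and> x < h1 t)" | "g1 t < x" "x < h1 t" "\<not> (g2 t < x \<and> x < h2 t)"
    | "g1 t < x" "x < h1 t" "g2 t < x" "x < h2 t" by blast
  then show ?thesis
  proof cases
    case 1
    then show ?thesis using first(2) second(1) \<open>0 < t\<close> \<open>0 < M * (\<epsilon> * exp (K * t))\<close> by simp
  next
    case 2
    have "Z t x < M * (\<epsilon> * exp (K * t))"
    proof (rule recently_entered_values_small[where Z = Z, OF assms(1-4) 2 first(1)])
      fix \<tau> assume "0 < \<tau>" "\<tau> \<le> T" "g1 \<tau> < x" "x < h1 \<tau>"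
      then show "\<exists>D. ((\<lambda>s. Z s x) has_real_derivative D) (at \<tau>) \<and> D \<le> C"
        using first(3,4) by blast
    qed (use first(2) in auto)
    then show ?thesis using second(2) 2(3) by simp
  next
    case 3
    have "Z t x - Z' t x < (M * \<epsilon>) * exp (K * t)"
    proof (rule below_exp_barrier_at_first_contact[OF DERIV_diff[OF first(3) second(3)] \<open>0 < t\<close>])
      show "Z s x - Z' s x < M * \<epsilon> * exp (K * s)" if "0 \<le> s" "s < t" for s
        using below[OF that] by (simp add: mult.assoc)
      assume "M * \<epsilon> * exp (K * t) \<le> Z t x - Z' t x"
      then show "rhs t x - rhs' t x < K * (M * \<epsilon> * exp (K * t))"
        using rhs[OF 3] \<open>0 < M * (\<epsilon> * exp (K * t))\<close> by (simp add: mult.assoc)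
    qed (use 3 \<open>0 < t\<close> in auto)
    then show ?thesis by (simp add: mult.assoc)
  qed
qed

lemma U_stays_ordered:
  assumes "0 < \<epsilon>" "0 < t" "t \<le> T" and before: "\<And>s. 0 \<le> s \<Longrightarrow> s < t \<Longrightarrow> ordered \<epsilon> s"
  shows "S1.U t x < S2.U t x + M * (\<epsilon> * exp (K * t))"
proof (rule component_stays_ordered[where Z = S1.U and Z' = S2.U and rhs = S1.rhs_u and rhs' = S2.rhs_u, OF assms])
  assume x: "g1 t < x" "x < h1 t" "g2 t < x" "x < h2 t" and "S2.U t x \<le> S1.U t x"
  then have "S1.rhs_u t x - S2.rhs_u t x \<le> (d1 * BJ1 * (2 * R) + e) * (M * (\<epsilon> * exp (K * t)))"
    using assms M_pos ordered_nonstrict_at_first_contact(3,4)[OF \<open>0 < t\<close> before]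
    by (intro rhs_u_difference_le) auto
  also have "\<dots> < K * (M * (\<epsilon> * exp (K * t)))"
    using K_bounds(2) M_pos \<open>0 < \<epsilon>\<close> by (intro mult_strict_right_mono) auto
  finally show "S1.rhs_u t x - S2.rhs_u t x < K * (M * (\<epsilon> * exp (K * t)))" .
qed (use assms ordered_components[OF before] S1.UV_outside_interior S2.UV_outside_interior S1.U_deriv S2.U_deriv
    S2.U_nonneg first_rhs_le_C(1) in \<open>auto intro: S1.U_continuous_time\<close>)

lemma V_stays_ordered:
  assumes "0 < \<epsilon>" "0 < t" "t \<le> T" and before: "\<And>s. 0 \<le> s \<Longrightarrow> s < t \<Longrightarrow> ordered \<epsilon> s"
  shows "S1.V t x < S2.V t x + M * (\<epsilon> * exp (K * t))"
proof (rule component_stays_ordered[where Z = S1.V and Z' = S2.V and rhs = S1.rhs_v and rhs' = S2.rhs_v, OF assms])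
  assume x: "g1 t < x" "x < h1 t" "g2 t < x" "x < h2 t" and "S2.V t x \<le> S1.V t x"
  then have "S1.rhs_v t x - S2.rhs_v t x \<le> (d2 * BJ2 * (2 * R) + LG) * (M * (\<epsilon> * exp (K * t)))"
    using assms M_pos ordered_nonstrict_at_first_contact(3,4)[OF \<open>0 < t\<close> before]
    by (intro rhs_v_difference_le) auto
  also have "\<dots> < K * (M * (\<epsilon> * exp (K * t)))"
    using K_bounds(3) M_pos \<open>0 < \<epsilon>\<close> by (intro mult_strict_right_mono) auto
  finally show "S1.rhs_v t x - S2.rhs_v t x < K * (M * (\<epsilon> * exp (K * t)))" .
qed (use assms ordered_components[OF before] S1.UV_outside_interior S2.UV_outside_interior S1.V_deriv S2.V_deriv
    S2.V_nonneg first_rhs_le_C(2) in \<open>auto intro: S1.V_continuous_time\<close>)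

lemma ordered_on_interval:
  assumes "0 < \<epsilon>" "t \<in> {0..T}"
  shows "ordered \<epsilon> t"
proof (rule real_continuous_induction[of "ordered \<epsilon>" 0 T t])
  show "ordered \<epsilon> 0" using \<open>0 < \<epsilon>\<close> by (rule ordered_0)
next
  fix \<tau> assume \<tau>: "0 < \<tau>" "\<tau> \<le> T" and before: "\<And>s. 0 \<le> s \<Longrightarrow> s < \<tau> \<Longrightarrow> ordered \<epsilon> s"
  note stays = h_stays_ordered g_stays_ordered U_stays_ordered V_stays_ordered
  show "ordered \<epsilon> \<tau>"
    using stays[OF \<open>0 < \<epsilon>\<close> \<tau> before] unfolding ordered_def by blast
next
  fix \<tau> assume \<tau>: "0 \<le> \<tau>" "\<tau> < T" and upto: "\<And>s. 0 \<le> s \<Longrightarrow> s \<le> \<tau> \<Longrightarrow> ordered \<epsilon> s"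
  have "open (- {t \<in> {0..T}. \<not> ordered \<epsilon> t})" using closed_disordered by (simp add: closed_def)
  moreover have "\<tau> \<in> - {t \<in> {0..T}. \<not> ordered \<epsilon> t}" using upto \<tau>(1) by auto
  ultimately obtain r where "0 < r" "ball \<tau> r \<subseteq> - {t \<in> {0..T}. \<not> ordered \<epsilon> t}" by (rule openE)
  then have "ordered \<epsilon> s" if "\<tau> < s" "s < \<tau> + min r (T - \<tau>)" for s
    using that \<tau> by (force simp: dist_real_def subset_iff)
  then show "\<exists>\<eta>>0. \<forall>s. \<tau> < s \<and> s < \<tau> + \<eta> \<longrightarrow> ordered \<epsilon> s"
    using \<open>0 < r\<close> \<tau>(2) by (intro exI[of _ "min r (T - \<tau>)"]) auto
qed (use assms in auto)

lemma comparison_up_to_T: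
  assumes "0 < t" "t \<le> T"
  shows "h1 t \<le> h2 t \<and> g2 t \<le> g1 t \<and> (\<forall>x. g1 t < x \<and> x < h1 t \<longrightarrow> u1 t x \<le> u2 t x \<and> v1 t x \<le> v2 t x)"
proof -
  have ordered: "ordered \<epsilon> t" if "0 < \<epsilon>" for \<epsilon> using ordered_on_interval[OF that] assms by simp
  have limit: "p \<le> q" if "\<And>\<epsilon>. 0 < \<epsilon> \<Longrightarrow> p < q + c * (\<epsilon> * exp (K * t))" "0 < c" for p q c
  proof (rule field_le_epsilon)
    fix e :: real assume "0 < e"
    then show "p \<le> q + e" using that(1)[of "e / (c * exp (K * t))"] \<open>0 < c\<close> by simp
  qed
  have fronts: "h1 t < h2 t + 1 * (\<epsilon> * exp (K * t)) \<and> g2 t < g1 t + 1 * (\<epsilon> * exp (K * t))"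
    if "0 < \<epsilon>" for \<epsilon>
    using ordered[OF that] by (simp add: ordered_def algebra_simps)
  have "h1 t \<le> h2 t" "g2 t \<le> g1 t" by (rule limit[of _ _ 1], use fronts in simp_all)+
  moreover have "u1 t x \<le> u2 t x \<and> v1 t x \<le> v2 t x" if "g1 t < x" "x < h1 t" for x
  proof -
    have x: "x \<in> {-R..R}" using that domains[of t] assms by auto
    have "S1.U t x \<le> S2.U t x" "S1.V t x \<le> S2.V t x"
      by (rule limit[of _ _ M], use ordered_components[OF ordered] M_pos assms in simp_all)+
    then show ?thesis using that \<open>h1 t \<le> h2 t\<close> \<open>g2 t \<le> g1 t\<close> by (simp add: zero_ext_inside)
  qed
  ultimately show ?thesis by blast
qed

end

context fbp_comparison
begin

lemma comparison:
  assumes "0 < t"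
  shows "h1 t \<le> h2 t \<and> g2 t \<le> g1 t \<and> (\<forall>x. g1 t < x \<and> x < h1 t \<longrightarrow> u1 t x \<le> u2 t x \<and> v1 t x \<le> v2 t x)"
proof -
  have "0 \<le> t" using assms by simp
  obtain R1 where R1: "0 < R1" "\<And>s. s \<in> {0..t} \<Longrightarrow> -R1 \<le> g1 s \<and> h1 s \<le> R1"
    using S1.domain_bounded[OF \<open>0 \<le> t\<close>] by blast
  obtain R2 where R2: "0 < R2" "\<And>s. s \<in> {0..t} \<Longrightarrow> -R2 \<le> g2 s \<and> h2 s \<le> R2"
    using S2.domain_bounded[OF \<open>0 \<le> t\<close>] by blast
  obtain B1 where B1: "0 < B1" "\<And>s x. s \<in> {0..t} \<Longrightarrow> S1.U s x \<le> B1 \<and> S1.V s x \<le> B1"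
    using S1.UV_bounded[OF \<open>0 \<le> t\<close>] by blast
  obtain B2 where B2: "0 < B2" "\<And>s x. s \<in> {0..t} \<Longrightarrow> S2.U s x \<le> B2 \<and> S2.V s x \<le> B2"
    using S2.UV_bounded[OF \<open>0 \<le> t\<close>] by blast
  obtain BJ1 BJ2 where "\<And>z. J1 z \<le> BJ1" "\<And>z. J2 z \<le> BJ2"
    using cond_J_bounded[OF S1.J1] cond_J_bounded[OF S1.J2] by metis
  moreover obtain BW where "0 \<le> BW" "\<And>y. W_clamped W y \<le> BW" using W_clamped_bounded[OF S1.W] by blast
  moreover obtain LW where "0 \<le> LW" "\<And>p q. p \<in> {0..2 * (R1 + R2)} \<Longrightarrow> q \<in> {0..2 * (R1 + R2)} \<Longrightarrow>
      \<bar>W p - W q\<bar> \<le> LW * \<bar>p - q\<bar>"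
    using cond_W_lipschitz[OF S1.W, of "2 * (R1 + R2)"] R1(1) R2(1) by auto
  moreover obtain LG where "0 \<le> LG" "\<And>p q. 0 \<le> q \<Longrightarrow> q \<le> p \<Longrightarrow> p \<le> B1 + B2 \<Longrightarrow> G p - G q \<le> LG * (p - q)"
    using cond_G1_lipschitz[OF S1.G, of "B1 + B2"] B1(1) B2(1) by auto
  moreover obtain \<delta> where "0 < \<delta>"
    "\<And>s s'. 0 \<le> s \<Longrightarrow> s \<le> s' \<Longrightarrow> s' \<le> t \<Longrightarrow> \<delta> * (s' - s) \<le> h1 s' - h1 s \<and> \<delta> * (s' - s) \<le> g1 s - g1 s'"
    using S1.fronts_speed_bound[OF \<open>0 \<le> t\<close>] by blast
  ultimately interpret bounds: fbp_comparison_on d1 d2 a b e \<rho> \<mu>1 \<mu>2 h0 J1 J2 W G u0 v0 g1 h1 g2 h2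
    u1 v1 u2 v2 t "R1 + R2" "B1 + B2" BJ1 BJ2 BW LW LG \<delta>
  proof unfold_locales
    fix s x assume s: "s \<in> {0..t}"
    show "-(R1 + R2) \<le> g1 s \<and> h1 s \<le> R1 + R2 \<and> -(R1 + R2) \<le> g2 s \<and> h2 s \<le> R1 + R2"
      using R1(1) R2(1) R1(2)[OF s] R2(2)[OF s] by auto
    show "S1.U s x \<le> B1 + B2 \<and> S1.V s x \<le> B1 + B2 \<and> S2.V s x \<le> B1 + B2"
      using B1(1) B2(1) B1(2)[OF s, of x] B2(2)[OF s, of x] by auto
  qed (use assms R1(1) R2(1) B1(1) B2(1) in simp_all)
  show ?thesis using bounds.comparison_up_to_T[OF assms order_refl] .
qed

end

theorem corollary2p9:
  fixes d1 d2 a b e \<rho> h0 \<mu>1 \<mu>2 :: real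
    and J1 J2 W G u0 v0 g1 h1 g2 h2 :: "real \<Rightarrow> real"
    and u1 v1 u2 v2 :: "real \<Rightarrow> real \<Rightarrow> real"
  assumes "d1 > 0" "d2 > 0" "a > 0" "b > 0" "e > 0" "\<rho> > 0" "h0 > 0"
    and "cond_J J1" "cond_J J2" "cond_W W" "cond_G1 G" "cond_G2 a b e G"
    and "cond_IC h0 u0 v0"
    and "0 < \<mu>1" "\<mu>1 \<le> \<mu>2"
    and "sol_P d1 d2 a b e \<rho> \<mu>1 J1 J2 W G h0 u0 v0 u1 v1 g1 h1"
    and "sol_P d1 d2 a b e \<rho> \<mu>2 J1 J2 W G h0 u0 v0 u2 v2 g2 h2"
  shows "\<forall>t>0. h1 t \<le> h2 t \<and> g2 t \<le> g1 t \<and>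
           (\<forall>x. g1 t < x \<and> x < h1 t \<longrightarrow> u1 t x \<le> u2 t x \<and> v1 t x \<le> v2 t x)"
proof -
  interpret fbp_comparison d1 d2 a b e \<rho> \<mu>1 \<mu>2 h0 J1 J2 W G u0 v0 g1 h1 g2 h2 u1 v1 u2 v2
    by unfold_locales (use assms in auto)
  show ?thesis using comparison by blast
qed

end
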